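(* Let $n,m\ge3$ be integers. If $Q_1\in\mathfrak{C}^0_{(m)}$ and $Q_2\in\mathfrak{C}^0_{(n)}$, then $Q_1Q_2\in\mathfrak{C}^0_{(n)}$ and $\|Q_1Q_2;\mathfrak{C}^0_{(n)}\|\le C\|Q_1;\mathfrak{C}^0_{(m)}\|\cdot\|Q_2;\mathfrak{C}^0_{(n)}\|$. If $Q_1\in\mathfrak{C}^{0,\alpha}_{(m)}$ and $Q_2\in\mathfrak{C}^{0,\alpha}_{(n)}$, then $Q_1Q_2\in\mathfrak{C}^{0,\alpha}_{(n)}$ and $\|Q_1Q_2;\mathfrak{C}^{0,\alpha}_{(n)}\|\le C\|Q_1;\mathfrak{C}^{0,\alpha}_{(m)}\|\cdot\|Q_2;\mathfrak{C}^{0,\alpha}_{(n)}\|$. Here $C$ is a constant independent of $Q_1,Q_2$.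
   Context: Fix $\mathsf{a}>0$, $\Xi_0>0$, $R_0=\mathsf{a}\Xi_0$, and $\alpha\in(0,1)$. For integer $n\ge3$ and $\Xi>0$, $B^{(n)}(\Xi)$ is the open ball of radius $\Xi$ in $\mathbb{R}^n$. For $f$ on $\bar B^{(n)}(\Xi)$: $\|f;C^0\|=\sup|f|$ and $\|f;C^{0,\alpha}\|=\sup|f|+\sup\{|f(\xi')-f(\xi)|/|\xi'-\xi|^\alpha:\ \xi,\xi'\in\bar B^{(n)}(\Xi),\ 0<|\xi'-\xi|\le1\}$. For a function $Q$ of $(\varpi,z)$, $\varpi\ge0$, set $Q^{\flat(n)}(\xi)=Q(\mathsf{a}\sqrt{\xi_1^2+\dots+\xi_{n-1}^2},\mathsf{a}\xi_n)$, and $r=\sqrt{\varpi^2+z^2}$. Kelvin transform: $\xi^\star=(\Xi_0/|\xi|)^2\xi$, $f_{\star(n)}(\xi^\star)=(|\xi|/\Xi_0)^{n-2}f(\xi)$. $\mathfrak{C}^{0}(\bar{\mathfrak{D}}(R))$ (resp. $\mathfrak{C}^{0,\alpha}(\bar{\mathfrak{D}}(R))$): continuous $Q$ on $\{r\le R\}$, even in $z$, with $Q^{\flat(n)}\in C^0(\bar B^{(n)}(R/\mathsf{a}))$ (resp. $C^{0,\alpha}$), norm that of $Q^{\flat(n)}$ (independent of $n$). $\mathfrak{C}^0_{(n)}(\overline{\mathfrak{D}^{c}}(R_0))$ (resp. $\mathfrak{C}^{0,\alpha}_{(n)}(\overline{\mathfrak{D}^{c}}(R_0))$): $Q$ on $\{r\ge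 R_0\}$, even in $z$, such that $(Q^{\flat(n)})_{\star(n)}$ on $\bar B^{(n)}(\Xi_0)\setminus\{0\}$ is the restriction of some $F\in C^0(\bar B^{(n)}(\Xi_0))$ (resp. $C^{0,\alpha}$); norm that of $F$. Cut-off $\chi\in C^\infty(\mathbb{R})$ with $\chi(t)=1$ for $t\le1$, $0<\chi<1$ on $(1,2)$, $\chi(t)=0$ for $t\ge2$; $Q^{[0]}=\chi(r/R_0)Q$, $Q^{[\infty]}=(1-\chi(r/R_0))Q$. $\mathfrak{C}^0_{(n)}$ (resp. $\mathfrak{C}^{0,\alpha}_{(n)}$): $Q$ even in $z$ with $Q^{[0]}\in\mathfrak{C}^0(\bar{\mathfrak{D}}(2R_0))$ and $Q^{[\infty]}\in\mathfrak{C}^0_{(n)}(\overline{\mathfrak{D}^c}(R_0))$ (resp. with $0,\alpha$), norm the maximum of the two norms. *)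

theory Defs
  imports "HOL-Analysis.Analysis"
begin

text \<open>Points of R^n are represented as functions nat => real vanishing at indices >= n;
  coordinate xi_k of the paper (k = 1..n) is index k-1.\<close>

definition enorm :: "nat \<Rightarrow> (nat \<Rightarrow> real) \<Rightarrow> real" where
  "enorm n \<xi> = sqrt (\<Sum>i<n. (\<xi> i)\<^sup>2)"

definition edist :: "nat \<Rightarrow> (nat \<Rightarrow> real) \<Rightarrow> (nat \<Rightarrow> real) \<Rightarrow> real" where
  "edist n \<xi> \<eta> = enorm n (\<lambda>i. \<xi> i - \<eta> i)"

definition cballn :: "nat \<Rightarrow> real \<Rightarrow> (nat \<Rightarrow> real) set" where
  "cballn n \<Xi> = {\<xi>. (\<forall>i\<ge>n. \<xi> i = 0) \<and> enorm n \<xi> \<le> \<Xi>}"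

definition contn_on :: "nat \<Rightarrow> (nat \<Rightarrow> real) set \<Rightarrow> ((nat \<Rightarrow> real) \<Rightarrow> real) \<Rightarrow> bool" where
  "contn_on n S f \<longleftrightarrow> (\<forall>x\<in>S. \<forall>e>0. \<exists>d>0. \<forall>y\<in>S. edist n y x < d \<longrightarrow> \<bar>f y - f x\<bar> < e)"

definition holder_quots :: "real \<Rightarrow> nat \<Rightarrow> real \<Rightarrow> ((nat \<Rightarrow> real) \<Rightarrow> real) \<Rightarrow> real set" where
  "holder_quots \<alpha> n \<Xi> f = {\<bar>f \<xi>' - f \<xi>\<bar> / (edist n \<xi>' \<xi>) powr \<alpha> | \<xi> \<xi>'.
      \<xi> \<in> cballn n \<Xi> \<and> \<xi>' \<in> cballn n \<Xi> \<and> 0 < edist n \<xi>' \<xi> \<and> edist n \<xi>' \<xi> \<le> 1}"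

text \<open>Function spaces on the closed ball: None = C^0, Some alpha = C^{0,alpha}.\<close>
definition inC :: "real option \<Rightarrow> nat \<Rightarrow> real \<Rightarrow> ((nat \<Rightarrow> real) \<Rightarrow> real) \<Rightarrow> bool" where
  "inC k n \<Xi> f \<longleftrightarrow> contn_on n (cballn n \<Xi>) f \<and>
     (case k of None \<Rightarrow> True | Some \<alpha> \<Rightarrow> bdd_above (holder_quots \<alpha> n \<Xi> f))"

definition normC :: "real option \<Rightarrow> nat \<Rightarrow> real \<Rightarrow> ((nat \<Rightarrow> real) \<Rightarrow> real) \<Rightarrow> real" where
  "normC k n \<Xi> f = (SUP \<xi>\<in>cballn n \<Xi>. \<bar>f \<xi>\<bar>) +
     (case k of None \<Rightarrow> 0 | Some \<alpha> \<Rightarrow> Sup (holder_quots \<alpha> n \<Xi> f))"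

definition flat :: "real \<Rightarrow> nat \<Rightarrow> (real \<Rightarrow> real \<Rightarrow> real) \<Rightarrow> (nat \<Rightarrow> real) \<Rightarrow> real" where
  "flat a n Q \<xi> = Q (a * sqrt (\<Sum>i<n-1. (\<xi> i)\<^sup>2)) (a * \<xi> (n-1))"

text \<open>Kelvin transform: f_*(eta) = (Xi0/|eta|)^(n-2) f(eta^*), since |eta^*| = Xi0^2/|eta|.\<close>
definition kelvin :: "real \<Rightarrow> nat \<Rightarrow> ((nat \<Rightarrow> real) \<Rightarrow> real) \<Rightarrow> (nat \<Rightarrow> real) \<Rightarrow> real" where
  "kelvin \<Xi>0 n f \<eta> = (\<Xi>0 / enorm n \<eta>) ^ (n - 2) * f (\<lambda>i. (\<Xi>0 / enorm n \<eta>)\<^sup>2 * \<eta> i)"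

definition rr :: "real \<Rightarrow> real \<Rightarrow> real" where
  "rr w z = sqrt (w\<^sup>2 + z\<^sup>2)"

definition int_space :: "real option \<Rightarrow> real \<Rightarrow> nat \<Rightarrow> real \<Rightarrow> (real \<Rightarrow> real \<Rightarrow> real) \<Rightarrow> bool" where
  "int_space k a n R Q \<longleftrightarrow>
     (\<forall>w z. w \<ge> 0 \<and> rr w z \<le> R \<longrightarrow> Q w (-z) = Q w z) \<and>
     continuous_on {(w, z). w \<ge> 0 \<and> rr w z \<le> R} (\<lambda>(w, z). Q w z) \<and>
     inC k n (R / a) (flat a n Q)"

definition int_norm :: "real option \<Rightarrow> real \<Rightarrow> nat \<Rightarrow> real \<Rightarrow> (real \<Rightarrow> real \<Rightarrow> real) \<Rightarrow> real" where
  "int_norm k a n R Q = normC k n (R / a) (flat a n Q)"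

definition ext_extends :: "real option \<Rightarrow> real \<Rightarrow> real \<Rightarrow> nat \<Rightarrow> (real \<Rightarrow> real \<Rightarrow> real)
    \<Rightarrow> ((nat \<Rightarrow> real) \<Rightarrow> real) \<Rightarrow> bool" where
  "ext_extends k a \<Xi>0 n Q F \<longleftrightarrow> inC k n \<Xi>0 F \<and>
     (\<forall>\<eta>\<in>cballn n \<Xi>0. enorm n \<eta> \<noteq> 0 \<longrightarrow> F \<eta> = kelvin \<Xi>0 n (flat a n Q) \<eta>)"

definition ext_space :: "real option \<Rightarrow> real \<Rightarrow> real \<Rightarrow> nat \<Rightarrow> (real \<Rightarrow> real \<Rightarrow> real) \<Rightarrow> bool" where
  "ext_space k a \<Xi>0 n Q \<longleftrightarrow>
     (\<forall>w z. w \<ge> 0 \<and> rr w z \<ge> a * \<Xi>0 \<longrightarrow> Q w (-z) = Q w z) \<and>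
     (\<exists>F. ext_extends k a \<Xi>0 n Q F)"

definition ext_norm :: "real option \<Rightarrow> real \<Rightarrow> real \<Rightarrow> nat \<Rightarrow> (real \<Rightarrow> real \<Rightarrow> real) \<Rightarrow> real" where
  "ext_norm k a \<Xi>0 n Q = normC k n \<Xi>0 (SOME F. ext_extends k a \<Xi>0 n Q F)"

definition cut0 :: "(real \<Rightarrow> real) \<Rightarrow> real \<Rightarrow> (real \<Rightarrow> real \<Rightarrow> real) \<Rightarrow> real \<Rightarrow> real \<Rightarrow> real" where
  "cut0 chi R0 Q w z = chi (rr w z / R0) * Q w z"

definition cutinf :: "(real \<Rightarrow> real) \<Rightarrow> real \<Rightarrow> (real \<Rightarrow> real \<Rightarrow> real) \<Rightarrow> real \<Rightarrow> real \<Rightarrow> real" where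
  "cutinf chi R0 Q w z = (1 - chi (rr w z / R0)) * Q w z"

definition glob_space :: "real option \<Rightarrow> real \<Rightarrow> real \<Rightarrow> (real \<Rightarrow> real) \<Rightarrow> nat \<Rightarrow> (real \<Rightarrow> real \<Rightarrow> real) \<Rightarrow> bool" where
  "glob_space k a \<Xi>0 chi n Q \<longleftrightarrow>
     (\<forall>w z. w \<ge> 0 \<longrightarrow> Q w (-z) = Q w z) \<and>
     int_space k a n (2 * (a * \<Xi>0)) (cut0 chi (a * \<Xi>0) Q) \<and>
     ext_space k a \<Xi>0 n (cutinf chi (a * \<Xi>0) Q)"

definition glob_norm :: "real option \<Rightarrow> real \<Rightarrow> real \<Rightarrow> (real \<Rightarrow> real) \<Rightarrow> nat \<Rightarrow> (real \<Rightarrow> real \<Rightarrow> real) \<Rightarrow> real" where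
  "glob_norm k a \<Xi>0 chi n Q =
     max (int_norm k a n (2 * (a * \<Xi>0)) (cut0 chi (a * \<Xi>0) Q))
         (ext_norm k a \<Xi>0 n (cutinf chi (a * \<Xi>0) Q))"

definition smooth_real :: "(real \<Rightarrow> real) \<Rightarrow> bool" where
  "smooth_real f \<longleftrightarrow> (\<forall>j x. ((deriv ^^ j) f) differentiable (at x))"

definition cutoff :: "(real \<Rightarrow> real) \<Rightarrow> bool" where
  "cutoff chi \<longleftrightarrow> smooth_real chi \<and> (\<forall>t\<le>1. chi t = 1) \<and>
     (\<forall>t. 1 < t \<and> t < 2 \<longrightarrow> 0 < chi t \<and> chi t < 1) \<and> (\<forall>t\<ge>2. chi t = 0)"

end

theory Submission
  imports Defs
begin

text \<open>
  On the ball of radius \<open>2 \<Xi>0\<close> the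
  flattened interior part of the product is \<open>\<chi> Q1 Q2 = (\<chi> Q1) (\<chi> Q2 + (1 - \<chi>) Q2)\<close>. On the Kelvin
  side the transform of \<open>(1 - \<chi>) Q1 Q2\<close> is \<open>Q1\<close> composed with the inversion times the Kelvin
  transform of \<open>(1 - \<chi>) Q2\<close>: the weight is absorbed by \<open>Q2\<close> alone, and the inverted \<open>Q1\<close> splits
  into the inverted interior part of \<open>Q1\<close>, which vanishes near the origin, and \<open>(|\<eta>|/\<Xi>0)^(m-2)\<close>
  times the Kelvin transform of the exterior part of \<open>Q1\<close> in dimension \<open>m\<close>.

  Every factor is bounded by the given norms: flattened functions of dimension \<open>m\<close> become functions
  of dimension \<open>n\<close> by composition with the 1-Lipschitz map \<open>\<xi> \<mapsto> (|\<xi>'|, 0, \<dots>, 0, \<xi>\<^sub>n)\<close>; the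
  inversion is Lipschitz away from the origin; the Kelvin weights are bounded Lipschitz functions
  where they are used; and a function vanishing on a ball keeps the bounds it has on the surrounding
  shell. Both norms are submultiplicative and grow at most by the factor \<open>3 L\<close> under composition
  with an \<open>L\<close>-Lipschitz map, \<open>L \<ge> 1\<close>.
\<close>

section \<open>Euclidean structure of the coordinate model\<close>

lemma enorm_nonneg [simp]: "0 \<le> enorm n x"
  by (simp add: enorm_def sum_nonneg)

lemma edist_nonneg [simp]: "0 \<le> edist n x y"
  by (simp add: edist_def)

lemma enorm_eq_L2_set: "enorm n x = L2_set x {..<n}"
  by (simp add: enorm_def L2_set_def)

lemma edist_eq_L2_set: "edist n x y = L2_set (\<lambda>i. x i - y i) {..<n}"
  by (simp add: edist_def enorm_eq_L2_set)

lemma enorm_power2: "(enorm n x)\<^sup>2 = (\<Sum>i<n. (x i)\<^sup>2)"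
  by (simp add: enorm_def sum_nonneg)

lemma edist_power2: "(edist n x y)\<^sup>2 = (\<Sum>i<n. (x i - y i)\<^sup>2)"
  by (simp add: edist_def enorm_power2)

lemma sum_lessThan_split_last: "0 < (n::nat) \<Longrightarrow> (\<Sum>i<n. f i) = (\<Sum>i<n - 1. f i) + f (n - 1)"
  by (cases n) simp_all

lemma enorm_power2_split_last:
  "0 < n \<Longrightarrow> (enorm n x)\<^sup>2 = (enorm (n - 1) x)\<^sup>2 + (x (n - 1))\<^sup>2"
  by (simp add: enorm_power2 sum_lessThan_split_last)

lemma edist_power2_split_last:
  "0 < n \<Longrightarrow> (edist n x y)\<^sup>2 = (edist (n - 1) x y)\<^sup>2 + (x (n - 1) - y (n - 1))\<^sup>2"
  by (simp add: edist_power2 sum_lessThan_split_last)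

lemma edist_commute: "edist n x y = edist n y x"
  by (simp add: edist_def enorm_def power2_commute)

lemma enorm_le_add_edist: "enorm n x \<le> enorm n y + edist n x y"
proof -
  have "enorm n x = L2_set (\<lambda>i. y i + (x i - y i)) {..<n}"
    by (simp add: enorm_eq_L2_set)
  also have "\<dots> \<le> enorm n y + edist n x y"
    unfolding edist_eq_L2_set enorm_eq_L2_set by (rule L2_set_triangle_ineq)
  finally show ?thesis .
qed

lemma abs_enorm_diff_le_edist: "\<bar>enorm n x - enorm n y\<bar> \<le> edist n x y"
  using enorm_le_add_edist[of n x y] enorm_le_add_edist[of n y x] edist_commute[of n x y]
  by linarith

lemma enorm_scale: "enorm n (\<lambda>i. c * x i) = \<bar>c\<bar> * enorm n x"
  by (simp add: enorm_def power_mult_distrib sum_distrib_left[symmetric] real_sqrt_mult)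

lemma radial_projection:
  assumes \<rho>: "0 < \<rho>" "\<rho> < enorm n y" and y: "y \<in> cballn n R"
  obtains w where "w \<in> cballn n R" "enorm n w = \<rho>" "edist n y w = enorm n y - \<rho>"
proof -
  define c where "c = \<rho> / enorm n y"
  have c: "0 < c" "c < 1"
    using \<rho> by (simp_all add: c_def)
  have norm: "enorm n (\<lambda>i. c * y i) = \<rho>"
    using \<rho> enorm_scale[of n c y] by (simp add: c_def)
  have "edist n y (\<lambda>i. c * y i) = enorm n (\<lambda>i. (1 - c) * y i)"
    by (simp add: edist_def algebra_simps)
  also have "\<dots> = (1 - c) * enorm n y"
    using c by (simp add: enorm_scale)
  also have "\<dots> = enorm n y - \<rho>"
    using \<rho> by (simp add: c_def field_simps)
  finally have "edist n y (\<lambda>i. c * y i) = enorm n y - \<rho>" .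
  moreover have "(\<lambda>i. c * y i) \<in> cballn n R"
    using y norm \<rho> by (simp add: cballn_def)
  ultimately show ?thesis
    using norm that by blast
qed

lemma abs_coord_le_enorm: "i < n \<Longrightarrow> \<bar>x i\<bar> \<le> enorm n x"
  unfolding enorm_def by (rule real_le_rsqrt) (auto intro: member_le_sum)

lemma enorm_first_axis:
  assumes "0 < n"
  shows "enorm n (\<lambda>i. if i = 0 then t else 0) = \<bar>t\<bar>"
proof -
  have "(\<Sum>i<n. (if i = 0 then t else 0)\<^sup>2) = (\<Sum>i<n. if i = 0 then t\<^sup>2 else 0)"
    by (intro sum.cong) auto
  then show ?thesis
    using assms by (simp add: enorm_def sum.delta)
qed

lemma cballn_zero: "0 \<le> R \<Longrightarrow> (\<lambda>i. 0) \<in> cballn n R"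
  by (simp add: cballn_def enorm_def)

lemma cballn_first_axis: "0 < n \<Longrightarrow> \<bar>t\<bar> \<le> R \<Longrightarrow> (\<lambda>i. if i = 0 then t else 0) \<in> cballn n R"
  by (simp add: cballn_def enorm_first_axis)

lemma cballn_enorm_eq_0:
  assumes "\<eta> \<in> cballn n R" "enorm n \<eta> = 0"
  shows "\<eta> = (\<lambda>i. 0)"
proof
  fix i show "\<eta> i = 0"
    using assms abs_coord_le_enorm[of i n \<eta>] by (cases "i < n") (auto simp: cballn_def)
qed

lemma continuous_on_edist_left: "continuous_on UNIV (\<lambda>y. edist n y x)"
  unfolding edist_def enorm_def
  by (intro continuous_on_real_sqrt continuous_on_sum continuous_on_power continuous_on_diff
      continuous_on_const continuous_on_product_coordinates)

lemma continuous_on_enorm: "continuous_on UNIV (enorm n)"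
  unfolding enorm_def
  by (intro continuous_on_real_sqrt continuous_on_sum continuous_on_power
      continuous_on_product_coordinates)

lemma compact_cballn: "compact (cballn n \<Xi>)"
proof -
  define B where "B = (\<lambda>i::nat. if i < n then {-\<bar>\<Xi>\<bar>..\<bar>\<Xi>\<bar>} else {0::real})"
  have "compactin (product_topology (\<lambda>i. euclidean) UNIV) (PiE UNIV B)"
    unfolding compactin_PiE B_def compactin_euclidean_iff by (simp add: compact_Icc)
  then have "compact (PiE UNIV B)"
    by (simp add: euclidean_product_topology)
  moreover have "closed {y. enorm n y \<le> \<Xi>}"
    by (rule closed_Collect_le[OF continuous_on_enorm]) auto
  moreover have "cballn n \<Xi> = PiE UNIV B \<inter> {y. enorm n y \<le> \<Xi>}"
  proof (intro equalityI subsetI IntI)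
    fix x assume x: "x \<in> cballn n \<Xi>"
    show "x \<in> PiE UNIV B"
    proof (rule PiE_I)
      fix i show "x i \<in> B i"
        using x abs_coord_le_enorm[of i n x] by (auto simp: B_def cballn_def)
    qed auto
    show "x \<in> {y. enorm n y \<le> \<Xi>}"
      using x by (simp add: cballn_def)
  next
    fix x assume "x \<in> PiE UNIV B \<inter> {y. enorm n y \<le> \<Xi>}"
    then have x: "x \<in> PiE UNIV B" and "enorm n x \<le> \<Xi>"
      by auto
    moreover have "x i = 0" if "n \<le> i" for i
      using PiE_mem[OF x, of i] that by (simp add: B_def)
    ultimately show "x \<in> cballn n \<Xi>"
      by (simp add: cballn_def)
  qed
  ultimately show ?thesis
    using compact_Int_closed by metis
qed

lemma contn_on_imp_continuous_on:
  assumes "contn_on n D f"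
  shows "continuous_on D f"
  unfolding continuous_on_topological
proof (intro ballI allI impI)
  fix x U assume x: "x \<in> D" and U: "open U" "f x \<in> U"
  then obtain e where e: "e > 0" "\<forall>y. dist y (f x) < e \<longrightarrow> y \<in> U"
    by (meson open_dist)
  obtain d where d: "d > 0" "\<forall>y\<in>D. edist n y x < d \<longrightarrow> \<bar>f y - f x\<bar> < e"
    using assms x e unfolding contn_on_def by blast
  show "\<exists>A. open A \<and> x \<in> A \<and> (\<forall>y\<in>D. y \<in> A \<longrightarrow> f y \<in> U)"
  proof (intro exI conjI ballI impI)
    show "open {y. edist n y x < d}"
      by (rule open_Collect_less[OF continuous_on_edist_left]) auto
    show "x \<in> {y. edist n y x < d}"
      using d by (simp add: edist_def enorm_def)
    fix y assume "y \<in> D" "y \<in> {y. edist n y x < d}"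
    then show "f y \<in> U"
      using d e by (auto simp: dist_real_def)
  qed
qed

lemma contn_on_bounded:
  assumes "contn_on n (cballn n \<Xi>) f"
  obtains B where "\<And>x. x \<in> cballn n \<Xi> \<Longrightarrow> \<bar>f x\<bar> \<le> B"
proof -
  have "compact (f ` cballn n \<Xi>)"
    using compact_continuous_image[OF contn_on_imp_continuous_on[OF assms] compact_cballn] .
  then have "bounded (f ` cballn n \<Xi>)"
    by (rule compact_imp_bounded)
  then obtain B where "\<forall>y\<in>f ` cballn n \<Xi>. norm y \<le> B"
    unfolding bounded_iff by blast
  then show ?thesis
    using that by auto
qed

lemma contn_on_eq_if_edist_eq_0:
  assumes "contn_on n D f" "x \<in> D" "y \<in> D" "edist n y x = 0"
  shows "f y = f x"
proof (rule ccontr)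
  assume "f y \<noteq> f x"
  then have "\<bar>f y - f x\<bar> > 0"
    by simp
  then obtain d where "d > 0" "\<forall>z\<in>D. edist n z x < d \<longrightarrow> \<bar>f z - f x\<bar> < \<bar>f y - f x\<bar>"
    using assms(1,2) unfolding contn_on_def by blast
  then show False
    using assms(3,4) by auto
qed

lemma contn_on_eq_if_eq_off_origin:
  assumes n: "0 < n" and \<Xi>: "0 < \<Xi>"
    and F: "contn_on n (cballn n \<Xi>) F" and G: "contn_on n (cballn n \<Xi>) G"
    and eq: "\<And>\<eta>. \<eta> \<in> cballn n \<Xi> \<Longrightarrow> enorm n \<eta> \<noteq> 0 \<Longrightarrow> F \<eta> = G \<eta>"
    and \<eta>: "\<eta> \<in> cballn n \<Xi>"
  shows "F \<eta> = G \<eta>"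
proof (rule ccontr)
  assume ne: "F \<eta> \<noteq> G \<eta>"
  then have \<eta>0: "\<eta> = (\<lambda>i. 0)"
    using eq \<eta> cballn_enorm_eq_0 by blast
  define e where "e = \<bar>F \<eta> - G \<eta>\<bar> / 2"
  have e: "e > 0"
    using ne by (simp add: e_def)
  obtain d1 where d1: "d1 > 0" "\<forall>y\<in>cballn n \<Xi>. edist n y \<eta> < d1 \<longrightarrow> \<bar>F y - F \<eta>\<bar> < e"
    using F \<eta> e unfolding contn_on_def by meson
  obtain d2 where d2: "d2 > 0" "\<forall>y\<in>cballn n \<Xi>. edist n y \<eta> < d2 \<longrightarrow> \<bar>G y - G \<eta>\<bar> < e"
    using G \<eta> e unfolding contn_on_def by meson
  define t where "t = min (min d1 d2) \<Xi> / 2"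
  have t: "0 < t" "t < d1" "t < d2" "t \<le> \<Xi>"
    using d1 d2 \<Xi> by (auto simp: t_def)
  define y where "y = (\<lambda>i::nat. if i = 0 then t else 0)"
  have y: "y \<in> cballn n \<Xi>" "enorm n y = t" "edist n y \<eta> = t"
    using n t by (simp_all add: y_def \<eta>0 cballn_first_axis enorm_first_axis edist_def)
  have "F y = G y"
    using eq[OF y(1)] y(2) t by simp
  moreover have "\<bar>F y - F \<eta>\<bar> < e" "\<bar>G y - G \<eta>\<bar> < e"
    using d1(2) d2(2) y(1,3) t by simp_all
  ultimately have "\<bar>F \<eta> - G \<eta>\<bar> < 2 * e"
    by (simp only: abs_less_iff) linarith
  then show False
    using e_def by simp
qed

lemma contn_on_dominated:
  assumes f: "contn_on n D f" and g: "contn_on n D g" and A: "0 \<le> A" and B: "0 \<le> B"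
    and dom: "\<And>x y. x \<in> D \<Longrightarrow> y \<in> D \<Longrightarrow> \<bar>h y - h x\<bar> \<le> A * \<bar>f y - f x\<bar> + B * \<bar>g y - g x\<bar>"
  shows "contn_on n D h"
  unfolding contn_on_def
proof (intro ballI allI impI)
  fix x e assume x: "x \<in> D" and e: "(0::real) < e"
  define e' where "e' = e / (A + B + 1)"
  have e': "0 < e'" "(A + B) * e' < e"
    using e A B by (simp_all add: e'_def field_simps)
  obtain d1 where d1: "d1 > 0" "\<forall>y\<in>D. edist n y x < d1 \<longrightarrow> \<bar>f y - f x\<bar> < e'"
    using f x e' unfolding contn_on_def by meson
  obtain d2 where d2: "d2 > 0" "\<forall>y\<in>D. edist n y x < d2 \<longrightarrow> \<bar>g y - g x\<bar> < e'"
    using g x e' unfolding contn_on_def by meson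
  show "\<exists>d>0. \<forall>y\<in>D. edist n y x < d \<longrightarrow> \<bar>h y - h x\<bar> < e"
  proof (intro exI[of _ "min d1 d2"] conjI ballI impI)
    fix y assume y: "y \<in> D" "edist n y x < min d1 d2"
    have "\<bar>h y - h x\<bar> \<le> A * \<bar>f y - f x\<bar> + B * \<bar>g y - g x\<bar>"
      by (rule dom[OF x y(1)])
    also have "\<dots> \<le> A * e' + B * e'"
      using d1 d2 y A B by (intro add_mono mult_left_mono) auto
    also have "\<dots> < e"
      using e' by (simp add: algebra_simps)
    finally show "\<bar>h y - h x\<bar> < e" .
  qed (use d1 d2 in simp)
qed

lemma contn_on_comp_lipschitz:
  assumes f: "contn_on n' D' f" and L: "0 < L"
    and maps: "\<And>x. x \<in> D \<Longrightarrow> \<phi> x \<in> D'"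
    and lip: "\<And>x y. x \<in> D \<Longrightarrow> y \<in> D \<Longrightarrow> edist n' (\<phi> y) (\<phi> x) \<le> L * edist n y x"
  shows "contn_on n D (\<lambda>x. f (\<phi> x))"
  unfolding contn_on_def
proof (intro ballI allI impI)
  fix x e assume x: "x \<in> D" and e: "(0::real) < e"
  obtain d where d: "d > 0" "\<forall>y\<in>D'. edist n' y (\<phi> x) < d \<longrightarrow> \<bar>f y - f (\<phi> x)\<bar> < e"
    using f maps[OF x] e unfolding contn_on_def by meson
  show "\<exists>d>0. \<forall>y\<in>D. edist n y x < d \<longrightarrow> \<bar>f (\<phi> y) - f (\<phi> x)\<bar> < e"
  proof (intro exI[of _ "d / L"] conjI ballI impI)
    fix y assume y: "y \<in> D" "edist n y x < d / L"
    have "edist n' (\<phi> y) (\<phi> x) < d"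
      using lip[OF x y(1)] y(2) L by (simp add: less_divide_eq mult.commute)
    then show "\<bar>f (\<phi> y) - f (\<phi> x)\<bar> < e"
      using d maps y(1) by blast
  qed (use d L in simp)
qed

lemma contn_on_lipschitz:
  assumes L: "0 \<le> L" and lip: "\<And>x y. x \<in> D \<Longrightarrow> y \<in> D \<Longrightarrow> \<bar>f y - f x\<bar> \<le> L * edist n y x"
  shows "contn_on n D f"
  unfolding contn_on_def
proof (intro ballI allI impI)
  fix x e assume x: "x \<in> D" and e: "(0::real) < e"
  show "\<exists>d>0. \<forall>y\<in>D. edist n y x < d \<longrightarrow> \<bar>f y - f x\<bar> < e"
  proof (intro exI[of _ "e / (L + 1)"] conjI ballI impI)
    fix y assume y: "y \<in> D" "edist n y x < e / (L + 1)"
    have "\<bar>f y - f x\<bar> \<le> L * edist n y x"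
      by (rule lip[OF x y(1)])
    also have "\<dots> \<le> L * (e / (L + 1))"
      using y(2) L by (intro mult_left_mono) auto
    also have "\<dots> < e"
      using L e by (simp add: field_simps)
    finally show "\<bar>f y - f x\<bar> < e" .
  qed (use e L in simp)
qed

section \<open>Hoelder bounds on subsets of the coordinate model\<close>

definition admissible :: "real option \<Rightarrow> bool" where
  "admissible k \<longleftrightarrow> (case k of None \<Rightarrow> True | Some \<alpha> \<Rightarrow> 0 < \<alpha> \<and> \<alpha> \<le> 1)"

definition holder_bounds :: "real option \<Rightarrow> nat \<Rightarrow> (nat \<Rightarrow> real) set \<Rightarrow>
    ((nat \<Rightarrow> real) \<Rightarrow> real) \<Rightarrow> real \<Rightarrow> real \<Rightarrow> bool" where
  "holder_bounds k n D f S H \<longleftrightarrow> 0 \<le> S \<and> 0 \<le> H \<and> contn_on n D f \<and> (\<forall>x\<in>D. \<bar>f x\<bar> \<le> S) \<and>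
     (\<forall>\<alpha>. k = Some \<alpha> \<longrightarrow> (\<forall>x\<in>D. \<forall>y\<in>D. 0 < edist n y x \<and> edist n y x \<le> 1 \<longrightarrow>
        \<bar>f y - f x\<bar> \<le> H * edist n y x powr \<alpha>))"

lemma admissibleD: "admissible k \<Longrightarrow> k = Some \<alpha> \<Longrightarrow> 0 < \<alpha> \<and> \<alpha> \<le> 1"
  by (simp add: admissible_def)

lemma holder_boundsI:
  assumes "0 \<le> S" "0 \<le> H" "contn_on n D f" "\<And>x. x \<in> D \<Longrightarrow> \<bar>f x\<bar> \<le> S"
    "\<And>\<alpha> x y. k = Some \<alpha> \<Longrightarrow> x \<in> D \<Longrightarrow> y \<in> D \<Longrightarrow> 0 < edist n y x \<Longrightarrow> edist n y x \<le> 1 \<Longrightarrow>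
        \<bar>f y - f x\<bar> \<le> H * edist n y x powr \<alpha>"
  shows "holder_bounds k n D f S H"
  using assms unfolding holder_bounds_def by blast

lemma holder_boundsD:
  assumes "holder_bounds k n D f S H"
  shows "0 \<le> S" "0 \<le> H" "contn_on n D f" "\<And>x. x \<in> D \<Longrightarrow> \<bar>f x\<bar> \<le> S"
    "\<And>\<alpha> x y. k = Some \<alpha> \<Longrightarrow> x \<in> D \<Longrightarrow> y \<in> D \<Longrightarrow> 0 < edist n y x \<Longrightarrow> edist n y x \<le> 1 \<Longrightarrow>
        \<bar>f y - f x\<bar> \<le> H * edist n y x powr \<alpha>"
  using assms unfolding holder_bounds_def by blast+

lemma holder_bounds_cong:
  assumes f: "holder_bounds k n D f S H" and eq: "\<And>x. x \<in> D \<Longrightarrow> f x = g x"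
  shows "holder_bounds k n D g S H"
proof -
  have "contn_on n D g"
    using holder_boundsD(3)[OF f] eq unfolding contn_on_def by simp
  then show ?thesis
    using holder_boundsD[OF f] eq by (intro holder_boundsI) force+
qed

lemma holder_bounds_add:
  assumes f: "holder_bounds k n D f S1 H1" and g: "holder_bounds k n D g S2 H2"
  shows "holder_bounds k n D (\<lambda>x. f x + g x) (S1 + S2) (H1 + H2)"
proof (rule holder_boundsI)
  note F = holder_boundsD[OF f] and G = holder_boundsD[OF g]
  show "0 \<le> S1 + S2" "0 \<le> H1 + H2"
    using F G by auto
  show "\<bar>f x + g x\<bar> \<le> S1 + S2" if "x \<in> D" for x
    using F(4)[OF that] G(4)[OF that] by linarith
  show "\<bar>f y + g y - (f x + g x)\<bar> \<le> (H1 + H2) * edist n y x powr \<alpha>"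
    if "k = Some \<alpha>" "x \<in> D" "y \<in> D" "0 < edist n y x" "edist n y x \<le> 1" for \<alpha> x y
    using F(5)[OF that] G(5)[OF that] by (simp add: algebra_simps)
  show "contn_on n D (\<lambda>x. f x + g x)"
    by (rule contn_on_dominated[OF F(3) G(3), of 1 1]) auto
qed

lemma abs_mult_diff_le:
  fixes a b c d S T :: real
  assumes "\<bar>a\<bar> \<le> S" "\<bar>d\<bar> \<le> T"
  shows "\<bar>a * b - c * d\<bar> \<le> S * \<bar>b - d\<bar> + T * \<bar>a - c\<bar>"
proof -
  have "a * b - c * d = a * (b - d) + d * (a - c)"
    by (simp add: algebra_simps)
  then have "\<bar>a * b - c * d\<bar> \<le> \<bar>a\<bar> * \<bar>b - d\<bar> + \<bar>d\<bar> * \<bar>a - c\<bar>"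
    by (metis abs_mult abs_triangle_ineq)
  also have "\<dots> \<le> S * \<bar>b - d\<bar> + T * \<bar>a - c\<bar>"
    by (intro add_mono mult_right_mono assms) auto
  finally show ?thesis .
qed

lemma holder_bounds_mult:
  assumes f: "holder_bounds k n D f S1 H1" and g: "holder_bounds k n D g S2 H2"
  shows "holder_bounds k n D (\<lambda>x. f x * g x) (S1 * S2) (S1 * H2 + S2 * H1)"
proof (rule holder_boundsI)
  note F = holder_boundsD[OF f] and G = holder_boundsD[OF g]
  have diff: "\<bar>f y * g y - f x * g x\<bar> \<le> S1 * \<bar>g y - g x\<bar> + S2 * \<bar>f y - f x\<bar>"
    if "x \<in> D" "y \<in> D" for x y
    by (rule abs_mult_diff_le) (use F(4) G(4) that in auto)
  show "0 \<le> S1 * S2" "0 \<le> S1 * H2 + S2 * H1"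
    using F G by auto
  show "\<bar>f x * g x\<bar> \<le> S1 * S2" if "x \<in> D" for x
    using F(4)[OF that] G(4)[OF that] by (simp add: abs_mult mult_mono')
  show "\<bar>f y * g y - f x * g x\<bar> \<le> (S1 * H2 + S2 * H1) * edist n y x powr \<alpha>"
    if "k = Some \<alpha>" "x \<in> D" "y \<in> D" "0 < edist n y x" "edist n y x \<le> 1" for \<alpha> x y
  proof -
    have "\<bar>f y * g y - f x * g x\<bar> \<le> S1 * \<bar>g y - g x\<bar> + S2 * \<bar>f y - f x\<bar>"
      using diff that by blast
    also have "\<dots> \<le> S1 * (H2 * edist n y x powr \<alpha>) + S2 * (H1 * edist n y x powr \<alpha>)"
      by (intro add_mono mult_left_mono F(5)[OF that] G(5)[OF that]) (use F G in auto)
    finally show ?thesis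
      by (simp add: algebra_simps)
  qed
  show "contn_on n D (\<lambda>x. f x * g x)"
    by (rule contn_on_dominated[OF G(3) F(3), of S1 S2]) (use F G diff in auto)
qed

text \<open>The factor \<open>H + 2 S\<close> covers pairs at distance \<open>d \<le> 1\<close> whose images are at distance
  \<open>d' > 1\<close>, where only the sup bound is available.\<close>

lemma holder_estimate_comp_lipschitz:
  fixes \<Delta> d d' :: real
  assumes \<alpha>: "0 < \<alpha>" "\<alpha> \<le> 1" and L: "1 \<le> L" and S: "0 \<le> S" and H: "0 \<le> H"
    and d: "0 < d" "d \<le> 1" and d': "0 \<le> d'" "d' \<le> L * d"
    and zero: "d' = 0 \<Longrightarrow> \<Delta> = 0"
    and near: "0 < d' \<Longrightarrow> d' \<le> 1 \<Longrightarrow> \<Delta> \<le> H * d' powr \<alpha>"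
    and far: "\<Delta> \<le> 2 * S"
  shows "\<Delta> \<le> (H + 2 * S) * L * d powr \<alpha>"
proof -
  have dpos: "0 < d powr \<alpha>"
    using d by simp
  consider "d' = 0" | "0 < d' \<and> d' \<le> 1" | "1 < d'"
    using d' by linarith
  then show ?thesis
  proof cases
    case 1
    then show ?thesis
      using zero S H L dpos by simp
  next
    case 2
    then have "\<Delta> \<le> H * d' powr \<alpha>"
      using near by blast
    also have "\<dots> \<le> H * (L * d) powr \<alpha>"
      using 2 d' \<alpha> H by (intro mult_left_mono powr_mono2) auto
    also have "\<dots> = H * L powr \<alpha> * d powr \<alpha>"
      using L d by (simp add: powr_mult)
    also have "\<dots> \<le> H * L * d powr \<alpha>"
      using powr_mono[of \<alpha> 1 L] L \<alpha> H dpos by (intro mult_right_mono mult_left_mono) auto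
    also have "\<dots> \<le> (H + 2 * S) * L * d powr \<alpha>"
      using S L dpos by (intro mult_right_mono) auto
    finally show ?thesis .
  next
    case 3
    have "d \<le> d powr \<alpha>"
      using powr_mono'[of \<alpha> 1 d] d \<alpha> by simp
    then have "1 \<le> L * d powr \<alpha>"
      using 3 d' L mult_left_mono[of d "d powr \<alpha>" L] by linarith
    then have "2 * S \<le> 2 * S * (L * d powr \<alpha>)"
      using S mult_left_mono[of 1 "L * d powr \<alpha>" "2 * S"] by simp
    also have "\<dots> \<le> (H + 2 * S) * L * d powr \<alpha>"
      using H L dpos by (simp add: algebra_simps)
    finally show ?thesis
      using far by linarith
  qed
qed

lemma holder_bounds_comp_lipschitz:
  assumes f: "holder_bounds k n' D' f S H" and k: "admissible k" and L: "1 \<le> L"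
    and maps: "\<And>x. x \<in> D \<Longrightarrow> \<phi> x \<in> D'"
    and lip: "\<And>x y. x \<in> D \<Longrightarrow> y \<in> D \<Longrightarrow> edist n' (\<phi> y) (\<phi> x) \<le> L * edist n y x"
  shows "holder_bounds k n D (\<lambda>x. f (\<phi> x)) S ((H + 2 * S) * L)"
proof (rule holder_boundsI)
  note F = holder_boundsD[OF f]
  show "0 \<le> S" "0 \<le> (H + 2 * S) * L"
    using F L by auto
  show "\<bar>f (\<phi> x)\<bar> \<le> S" if "x \<in> D" for x
    using F(4) maps that by blast
  show "contn_on n D (\<lambda>x. f (\<phi> x))"
    by (rule contn_on_comp_lipschitz[OF F(3) _ maps lip]) (use L in auto)
  show "\<bar>f (\<phi> y) - f (\<phi> x)\<bar> \<le> (H + 2 * S) * L * edist n y x powr \<alpha>"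
    if a: "k = Some \<alpha>" and x: "x \<in> D" and y: "y \<in> D"
      and d0: "0 < edist n y x" and d1: "edist n y x \<le> 1" for \<alpha> x y
  proof (rule holder_estimate_comp_lipschitz[OF _ _ L F(1,2) d0 d1 edist_nonneg lip[OF x y]])
    show "0 < \<alpha>" "\<alpha> \<le> 1"
      using admissibleD[OF k a] by auto
    show "\<bar>f (\<phi> y) - f (\<phi> x)\<bar> = 0" if "edist n' (\<phi> y) (\<phi> x) = 0"
      using contn_on_eq_if_edist_eq_0[OF F(3) maps[OF x] maps[OF y] that] by simp
    show "\<bar>f (\<phi> y) - f (\<phi> x)\<bar> \<le> H * edist n' (\<phi> y) (\<phi> x) powr \<alpha>"
      if "0 < edist n' (\<phi> y) (\<phi> x)" "edist n' (\<phi> y) (\<phi> x) \<le> 1"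
      by (rule F(5)[OF a maps[OF x] maps[OF y] that])
    show "\<bar>f (\<phi> y) - f (\<phi> x)\<bar> \<le> 2 * S"
      using F(4)[OF maps[OF x]] F(4)[OF maps[OF y]] by linarith
  qed
qed

lemma holder_bounds_lipschitz:
  assumes k: "admissible k" and S: "0 \<le> S" and L: "0 \<le> L"
    and bound: "\<And>x. x \<in> D \<Longrightarrow> \<bar>f x\<bar> \<le> S"
    and lip: "\<And>x y. x \<in> D \<Longrightarrow> y \<in> D \<Longrightarrow> \<bar>f y - f x\<bar> \<le> L * edist n y x"
  shows "holder_bounds k n D f S L"
proof (rule holder_boundsI[OF S L contn_on_lipschitz[OF L lip] bound])
  show "\<bar>f y - f x\<bar> \<le> L * edist n y x powr \<alpha>"
    if a: "k = Some \<alpha>" and "x \<in> D" "y \<in> D" "0 < edist n y x" "edist n y x \<le> 1" for \<alpha> x y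
  proof -
    have "0 < \<alpha>" "\<alpha> \<le> 1"
      using admissibleD[OF k a] by auto
    then have "edist n y x \<le> edist n y x powr \<alpha>"
      using powr_mono'[of \<alpha> 1 "edist n y x"] that by simp
    then show ?thesis
      using lip[OF that(2,3)] L by (meson mult_left_mono order_trans)
  qed
qed

text \<open>A function vanishing on the inner ball \<open>|x| \<le> \<rho>\<close> inherits its Hoelder constant from the
  shell \<open>\<rho> \<le> |x|\<close>: a pair with one point inside is compared through the radial projection
  of the outer point onto the sphere \<open>|x| = \<rho>\<close>, which is at least as close.\<close>

lemma holder_estimate_extend_zero:
  assumes \<alpha>: "0 < \<alpha>" and \<rho>: "0 < \<rho>"
    and zero: "\<And>x. x \<in> cballn n R \<Longrightarrow> enorm n x \<le> \<rho> \<Longrightarrow> f x = 0"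
    and f: "holder_bounds (Some \<alpha>) n {x \<in> cballn n R. \<rho> \<le> enorm n x} f S H"
    and x: "x \<in> cballn n R" "enorm n x \<le> \<rho>" and y: "y \<in> cballn n R"
    and d1: "edist n y x \<le> 1"
  shows "\<bar>f y - f x\<bar> \<le> H * edist n y x powr \<alpha>"
proof -
  note F = holder_boundsD[OF f]
  have fx: "f x = 0"
    using zero x by blast
  show ?thesis
  proof (cases "enorm n y \<le> \<rho>")
    case True
    then show ?thesis
      using fx zero[OF y] F(2) by simp
  next
    case False
    then obtain w where w: "w \<in> cballn n R" "enorm n w = \<rho>" "edist n y w = enorm n y - \<rho>"
      using radial_projection[OF \<rho> _ y] by auto
    then have wA: "w \<in> {x \<in> cballn n R. \<rho> \<le> enorm n x}" and fw: "f w = 0"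
      using zero by auto
    have yA: "y \<in> {x \<in> cballn n R. \<rho> \<le> enorm n x}"
      using y False by simp
    have dw: "0 < edist n y w" "edist n y w \<le> edist n y x"
      using w False x abs_enorm_diff_le_edist[of n y x] by auto
    have "\<bar>f y - f x\<bar> = \<bar>f y - f w\<bar>"
      using fx fw by simp
    also have "\<dots> \<le> H * edist n y w powr \<alpha>"
      using F(5)[OF refl wA yA dw(1)] dw(2) d1 by simp
    also have "\<dots> \<le> H * edist n y x powr \<alpha>"
      using F(2) dw \<alpha> by (intro mult_left_mono powr_mono2) auto
    finally show ?thesis .
  qed
qed

lemma contn_on_extend_zero:
  assumes zero: "\<And>x. x \<in> cballn n R \<Longrightarrow> enorm n x \<le> \<rho> \<Longrightarrow> f x = 0"
    and f: "contn_on n {x \<in> cballn n R. \<rho> \<le> enorm n x} f"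
  shows "contn_on n (cballn n R) f"
  unfolding contn_on_def
proof (intro ballI allI impI)
  fix x e assume x: "x \<in> cballn n R" and e: "(0::real) < e"
  have near: "enorm n y \<le> enorm n x + edist n y x" for y
    using enorm_le_add_edist[of n y x] by simp
  show "\<exists>d>0. \<forall>y\<in>cballn n R. edist n y x < d \<longrightarrow> \<bar>f y - f x\<bar> < e"
  proof (cases "enorm n x < \<rho>")
    case True
    show ?thesis
    proof (intro exI[of _ "\<rho> - enorm n x"] conjI ballI impI)
      fix y assume y: "y \<in> cballn n R" "edist n y x < \<rho> - enorm n x"
      then show "\<bar>f y - f x\<bar> < e"
        using zero[OF y(1)] zero[OF x] near[of y] True e by simp
    qed (use True in simp)
  next
    case False
    then obtain d1 where d1: "d1 > 0"
      "\<forall>y\<in>{x \<in> cballn n R. \<rho> \<le> enorm n x}. edist n y x < d1 \<longrightarrow> \<bar>f y - f x\<bar> < e"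
      using f x e unfolding contn_on_def by force
    define d where "d = (if \<rho> < enorm n x then min d1 (enorm n x - \<rho>) else d1)"
    show ?thesis
    proof (intro exI[of _ d] conjI ballI impI)
      fix y assume y: "y \<in> cballn n R" "edist n y x < d"
      show "\<bar>f y - f x\<bar> < e"
      proof (cases "\<rho> \<le> enorm n y")
        case True
        then show ?thesis
          using d1 y by (simp add: d_def split: if_splits)
      next
        case yin: False
        have "enorm n x \<le> enorm n y + edist n y x"
          using enorm_le_add_edist[of n x y] edist_commute[of n x y] by simp
        then have "\<not> \<rho> < enorm n x"
          using y yin by (auto simp: d_def split: if_splits)
        then show ?thesis
          using zero[OF x] zero[OF y(1)] yin e by simp
      qed
    qed (use d1 False in \<open>simp add: d_def\<close>)
  qed
qed

lemma holder_bounds_extend_zero: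
  assumes k: "admissible k" and \<rho>: "0 < \<rho>"
    and zero: "\<And>x. x \<in> cballn n R \<Longrightarrow> enorm n x \<le> \<rho> \<Longrightarrow> f x = 0"
    and f: "holder_bounds k n {x \<in> cballn n R. \<rho> \<le> enorm n x} f S H"
  shows "holder_bounds k n (cballn n R) f S H"
proof (rule holder_boundsI)
  note F = holder_boundsD[OF f]
  show "0 \<le> S" "0 \<le> H"
    using F(1,2) by auto
  show "contn_on n (cballn n R) f"
    by (rule contn_on_extend_zero[OF zero F(3)])
  show "\<bar>f x\<bar> \<le> S" if "x \<in> cballn n R" for x
    using zero[OF that] F(1) F(4)[of x] that by force
  show "\<bar>f y - f x\<bar> \<le> H * edist n y x powr \<alpha>"
    if a: "k = Some \<alpha>" and x: "x \<in> cballn n R" and y: "y \<in> cballn n R"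
      and d0: "0 < edist n y x" and d1: "edist n y x \<le> 1" for \<alpha> x y
  proof -
    have \<alpha>: "0 < \<alpha>"
      using admissibleD[OF k a] by simp
    have across: "\<bar>f v - f u\<bar> \<le> H * edist n v u powr \<alpha>"
      if "u \<in> cballn n R" "enorm n u \<le> \<rho>" "v \<in> cballn n R" "edist n v u \<le> 1" for u v
      using holder_estimate_extend_zero[OF \<alpha> \<rho>, of n R f S H u v] zero f[unfolded a] that
      by blast
    consider "enorm n x \<le> \<rho>" | "enorm n y \<le> \<rho>" | "\<rho> \<le> enorm n x" "\<rho> \<le> enorm n y"
      by linarith
    then show ?thesis
    proof cases
      case 1
      then show ?thesis
        using across x y d1 by blast
    next
      case 2
      then show ?thesis
        using across[OF y 2 x] d1 by (simp add: edist_commute abs_minus_commute)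
    next
      case 3
      then show ?thesis
        using F(5)[OF a _ _ d0 d1] x y by simp
    qed
  qed
qed

definition holder_seminorm :: "real option \<Rightarrow> nat \<Rightarrow> real \<Rightarrow> ((nat \<Rightarrow> real) \<Rightarrow> real) \<Rightarrow> real" where
  "holder_seminorm k n \<Xi> f = (case k of None \<Rightarrow> 0 | Some \<alpha> \<Rightarrow> Sup (holder_quots \<alpha> n \<Xi> f))"

lemma normC_eq: "normC k n \<Xi> f = (SUP \<xi>\<in>cballn n \<Xi>. \<bar>f \<xi>\<bar>) + holder_seminorm k n \<Xi> f"
  by (simp add: normC_def holder_seminorm_def)

lemma holder_quots_nonempty:
  assumes "0 < n" "0 < \<Xi>"
  shows "holder_quots \<alpha> n \<Xi> f \<noteq> {}"
proof -
  define t where "t = min \<Xi> 1"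
  define p where "p = (\<lambda>i::nat. if i = 0 then t else 0)"
  have "p \<in> cballn n \<Xi>" "(\<lambda>i. 0) \<in> cballn n \<Xi>"
    using assms by (simp_all add: t_def p_def cballn_first_axis cballn_zero)
  moreover have "edist n p (\<lambda>i. 0) = t"
    using assms by (simp add: t_def p_def edist_def enorm_first_axis)
  ultimately have "\<bar>f p - f (\<lambda>i. 0)\<bar> / t powr \<alpha> \<in> holder_quots \<alpha> n \<Xi> f"
    unfolding holder_quots_def using assms
    by (intro CollectI exI[of _ "\<lambda>i. 0"] exI[of _ p]) (simp add: t_def)
  then show ?thesis
    by blast
qed

lemma holder_quots_nonneg: "q \<in> holder_quots \<alpha> n \<Xi> f \<Longrightarrow> 0 \<le> q"
  by (auto simp: holder_quots_def)

lemma holder_bounds_normC: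
  assumes n: "0 < n" and \<Xi>: "0 < \<Xi>" and f: "inC k n \<Xi> f"
  shows "holder_bounds k n (cballn n \<Xi>) f (SUP \<xi>\<in>cballn n \<Xi>. \<bar>f \<xi>\<bar>) (holder_seminorm k n \<Xi> f)"
proof (rule holder_boundsI)
  show c: "contn_on n (cballn n \<Xi>) f"
    using f by (simp add: inC_def)
  obtain B where bound: "\<And>x. x \<in> cballn n \<Xi> \<Longrightarrow> \<bar>f x\<bar> \<le> B"
    using contn_on_bounded[OF c] by blast
  have bdd: "bdd_above ((\<lambda>\<xi>. \<bar>f \<xi>\<bar>) ` cballn n \<Xi>)"
    by (rule bdd_aboveI2) (rule bound)
  show sup: "\<bar>f x\<bar> \<le> (SUP \<xi>\<in>cballn n \<Xi>. \<bar>f \<xi>\<bar>)" if "x \<in> cballn n \<Xi>" for x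
    by (rule cSUP_upper[OF that bdd])
  have "(\<lambda>i. 0) \<in> cballn n \<Xi>"
    using \<Xi> by (simp add: cballn_zero)
  then show "0 \<le> (SUP \<xi>\<in>cballn n \<Xi>. \<bar>f \<xi>\<bar>)"
    using sup by (meson abs_ge_zero order_trans)
  show "0 \<le> holder_seminorm k n \<Xi> f"
  proof (cases k)
    case (Some \<alpha>)
    then have bdd: "bdd_above (holder_quots \<alpha> n \<Xi> f)"
      using f by (simp add: inC_def)
    obtain q where q: "q \<in> holder_quots \<alpha> n \<Xi> f"
      using holder_quots_nonempty[OF n \<Xi>] by blast
    have "0 \<le> q"
      by (rule holder_quots_nonneg[OF q])
    also have "q \<le> Sup (holder_quots \<alpha> n \<Xi> f)"
      by (rule cSup_upper[OF q bdd])
    finally show ?thesis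
      using Some by (simp add: holder_seminorm_def)
  qed (simp add: holder_seminorm_def)
  show "\<bar>f y - f x\<bar> \<le> holder_seminorm k n \<Xi> f * edist n y x powr \<alpha>"
    if a: "k = Some \<alpha>" and x: "x \<in> cballn n \<Xi>" and y: "y \<in> cballn n \<Xi>"
      and d0: "0 < edist n y x" and d1: "edist n y x \<le> 1" for \<alpha> x y
  proof -
    have "\<bar>f y - f x\<bar> / edist n y x powr \<alpha> \<in> holder_quots \<alpha> n \<Xi> f"
      unfolding holder_quots_def using x y d0 d1 by blast
    then have "\<bar>f y - f x\<bar> / edist n y x powr \<alpha> \<le> Sup (holder_quots \<alpha> n \<Xi> f)"
      using f a by (intro cSup_upper) (simp_all add: inC_def)
    then show ?thesis
      using a d0 by (simp add: holder_seminorm_def divide_le_eq)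
  qed
qed

lemma inC_normC_le_if_holder_bounds:
  assumes n: "0 < n" and \<Xi>: "0 < \<Xi>" and f: "holder_bounds k n (cballn n \<Xi>) f S H"
  shows "inC k n \<Xi> f \<and> normC k n \<Xi> f \<le> S + H"
proof -
  note F = holder_boundsD[OF f]
  have sup: "(SUP \<xi>\<in>cballn n \<Xi>. \<bar>f \<xi>\<bar>) \<le> S"
    by (rule cSUP_least) (use cballn_zero[of \<Xi> n] \<Xi> F(4) in auto)
  have quot: "q \<le> H" if a: "k = Some \<alpha>" and q: "q \<in> holder_quots \<alpha> n \<Xi> f" for \<alpha> q
  proof -
    obtain x y where xy: "q = \<bar>f y - f x\<bar> / edist n y x powr \<alpha>" "x \<in> cballn n \<Xi>" "y \<in> cballn n \<Xi>"
      "0 < edist n y x" "edist n y x \<le> 1"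
      using q unfolding holder_quots_def by blast
    then show ?thesis
      using F(5)[OF a xy(2-5)] by (simp add: divide_le_eq)
  qed
  have "inC k n \<Xi> f"
    using F(3) quot by (cases k) (auto simp: inC_def bdd_above_def)
  moreover have "holder_seminorm k n \<Xi> f \<le> H"
  proof (cases k)
    case (Some \<alpha>)
    have "Sup (holder_quots \<alpha> n \<Xi> f) \<le> H"
      by (rule cSup_least[OF holder_quots_nonempty[OF n \<Xi>] quot[OF Some]])
    then show ?thesis
      using Some by (simp add: holder_seminorm_def)
  qed (use F(2) in \<open>simp add: holder_seminorm_def\<close>)
  ultimately show ?thesis
    using sup by (simp add: normC_eq)
qed

definition normC_le :: "real option \<Rightarrow> nat \<Rightarrow> (nat \<Rightarrow> real) set \<Rightarrow> ((nat \<Rightarrow> real) \<Rightarrow> real) \<Rightarrow> real \<Rightarrow> bool" where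
  "normC_le k n D f T \<longleftrightarrow> (\<exists>S H. holder_bounds k n D f S H \<and> S + H \<le> T)"

lemma normC_le_cballn_iff:
  assumes "0 < n" "0 < \<Xi>"
  shows "normC_le k n (cballn n \<Xi>) f T \<longleftrightarrow> inC k n \<Xi> f \<and> normC k n \<Xi> f \<le> T"
proof
  assume "normC_le k n (cballn n \<Xi>) f T"
  then obtain S H where "holder_bounds k n (cballn n \<Xi>) f S H" "S + H \<le> T"
    unfolding normC_le_def by blast
  then show "inC k n \<Xi> f \<and> normC k n \<Xi> f \<le> T"
    using inC_normC_le_if_holder_bounds[OF assms] by fastforce
next
  assume "inC k n \<Xi> f \<and> normC k n \<Xi> f \<le> T"
  then show "normC_le k n (cballn n \<Xi>) f T"
    using holder_bounds_normC[OF assms] unfolding normC_le_def normC_eq by blast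
qed

lemma normC_le_nonneg:
  assumes "normC_le k n D f T"
  shows "0 \<le> T"
proof -
  obtain S H where f: "holder_bounds k n D f S H" and "S + H \<le> T"
    using assms unfolding normC_le_def by blast
  then show ?thesis
    using holder_boundsD(1,2)[OF f] by linarith
qed

lemma normC_le_imp_contn_on: "normC_le k n D f T \<Longrightarrow> contn_on n D f"
  unfolding normC_le_def using holder_boundsD(3) by blast

lemma normC_le_cong: "normC_le k n D f T \<Longrightarrow> (\<And>x. x \<in> D \<Longrightarrow> f x = g x) \<Longrightarrow> normC_le k n D g T"
  unfolding normC_le_def using holder_bounds_cong by blast

lemma normC_le_mono: "normC_le k n D f T \<Longrightarrow> T \<le> T' \<Longrightarrow> normC_le k n D f T'"
  unfolding normC_le_def by force

lemma normC_le_add: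
  assumes "normC_le k n D f T1" "normC_le k n D g T2"
  shows "normC_le k n D (\<lambda>x. f x + g x) (T1 + T2)"
proof -
  obtain S1 H1 S2 H2 where "holder_bounds k n D f S1 H1" "S1 + H1 \<le> T1"
    "holder_bounds k n D g S2 H2" "S2 + H2 \<le> T2"
    using assms unfolding normC_le_def by blast
  then show ?thesis
    unfolding normC_le_def
    by (intro exI[of _ "S1 + S2"] exI[of _ "H1 + H2"] conjI holder_bounds_add) auto
qed

lemma normC_le_mult:
  assumes "normC_le k n D f T1" "normC_le k n D g T2"
  shows "normC_le k n D (\<lambda>x. f x * g x) (T1 * T2)"
proof -
  obtain S1 H1 S2 H2 where f: "holder_bounds k n D f S1 H1" "S1 + H1 \<le> T1"
    and g: "holder_bounds k n D g S2 H2" "S2 + H2 \<le> T2"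
    using assms unfolding normC_le_def by blast
  note F = holder_boundsD(1,2)[OF f(1)] and G = holder_boundsD(1,2)[OF g(1)]
  have "S1 * S2 + (S1 * H2 + S2 * H1) \<le> (S1 + H1) * (S2 + H2)"
    using F G by (simp add: algebra_simps)
  also have "\<dots> \<le> T1 * T2"
    using f(2) g(2) F G by (intro mult_mono) auto
  finally show ?thesis
    unfolding normC_le_def using holder_bounds_mult[OF f(1) g(1)] by blast
qed

lemma normC_le_comp_lipschitz:
  assumes f: "normC_le k n' D' f T" and k: "admissible k" and L: "1 \<le> L"
    and maps: "\<And>x. x \<in> D \<Longrightarrow> \<phi> x \<in> D'"
    and lip: "\<And>x y. x \<in> D \<Longrightarrow> y \<in> D \<Longrightarrow> edist n' (\<phi> y) (\<phi> x) \<le> L * edist n y x"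
  shows "normC_le k n D (\<lambda>x. f (\<phi> x)) (3 * L * T)"
proof -
  obtain S H where g: "holder_bounds k n' D' f S H" "S + H \<le> T"
    using f unfolding normC_le_def by blast
  note G = holder_boundsD(1,2)[OF g(1)]
  have "S \<le> L * S" "0 \<le> L * H"
    using G L mult_right_mono[of 1 L S] by simp_all
  then have "S + (H + 2 * S) * L \<le> 3 * L * (S + H)"
    by (simp add: algebra_simps)
  also have "\<dots> \<le> 3 * L * T"
    using g(2) L by simp
  finally show ?thesis
    unfolding normC_le_def using holder_bounds_comp_lipschitz[OF g(1) k L maps lip] by blast
qed

lemma normC_le_lipschitz:
  assumes "admissible k" "0 \<le> S" "0 \<le> L"
    and "\<And>x. x \<in> D \<Longrightarrow> \<bar>f x\<bar> \<le> S"
    and "\<And>x y. x \<in> D \<Longrightarrow> y \<in> D \<Longrightarrow> \<bar>f y - f x\<bar> \<le> L * edist n y x"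
  shows "normC_le k n D f (S + L)"
  unfolding normC_le_def using holder_bounds_lipschitz[OF assms] by blast

lemma normC_le_extend_zero:
  assumes "admissible k" "0 < \<rho>"
    and "\<And>x. x \<in> cballn n R \<Longrightarrow> enorm n x \<le> \<rho> \<Longrightarrow> f x = 0"
    and "normC_le k n {x \<in> cballn n R. \<rho> \<le> enorm n x} f T"
  shows "normC_le k n (cballn n R) f T"
proof -
  obtain S H where f: "holder_bounds k n {x \<in> cballn n R. \<rho> \<le> enorm n x} f S H" "S + H \<le> T"
    using assms(4) unfolding normC_le_def by blast
  have "holder_bounds k n (cballn n R) f S H"
    using holder_bounds_extend_zero[OF assms(1,2) _ f(1)] assms(3) by blast
  then show ?thesis
    unfolding normC_le_def using f(2) by blast
qed

lemma abs_power_diff_le: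
  fixes s t :: real
  assumes "0 \<le> s" "s \<le> 1" "0 \<le> t" "t \<le> 1"
  shows "\<bar>s ^ p - t ^ p\<bar> \<le> real p * \<bar>s - t\<bar>"
proof (induction p)
  case (Suc p)
  have "s ^ Suc p - t ^ Suc p = s * (s ^ p - t ^ p) + t ^ p * (s - t)"
    by (simp add: algebra_simps)
  then have "\<bar>s ^ Suc p - t ^ Suc p\<bar> \<le> \<bar>s\<bar> * \<bar>s ^ p - t ^ p\<bar> + \<bar>t ^ p\<bar> * \<bar>s - t\<bar>"
    by (metis abs_mult abs_triangle_ineq)
  also have "\<dots> \<le> 1 * (real p * \<bar>s - t\<bar>) + 1 * \<bar>s - t\<bar>"
    using assms Suc.IH by (intro add_mono mult_mono) (auto simp: power_le_one)
  finally show ?case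
    by (simp add: algebra_simps)
qed simp

lemma normC_le_power:
  assumes k: "admissible k" and L: "0 \<le> L"
    and range: "\<And>x. x \<in> D \<Longrightarrow> 0 \<le> g x \<and> g x \<le> 1"
    and lip: "\<And>x y. x \<in> D \<Longrightarrow> y \<in> D \<Longrightarrow> \<bar>g y - g x\<bar> \<le> L * edist n y x"
  shows "normC_le k n D (\<lambda>x. g x ^ p) (1 + real p * L)"
proof (rule normC_le_lipschitz[OF k])
  show "\<bar>g x ^ p\<bar> \<le> 1" if "x \<in> D" for x
    using range[OF that] by (simp add: power_le_one)
  show "\<bar>g y ^ p - g x ^ p\<bar> \<le> real p * L * edist n y x" if "x \<in> D" "y \<in> D" for x y
  proof -
    have "\<bar>g y ^ p - g x ^ p\<bar> \<le> real p * \<bar>g y - g x\<bar>"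
      using range that by (intro abs_power_diff_le) auto
    also have "\<dots> \<le> real p * (L * edist n y x)"
      using lip[OF that] by (intro mult_left_mono) auto
    finally show ?thesis
      by (simp add: mult.assoc)
  qed
qed (use L in auto)

section \<open>Inversion in a sphere\<close>

definition inversion :: "real \<Rightarrow> nat \<Rightarrow> (nat \<Rightarrow> real) \<Rightarrow> (nat \<Rightarrow> real)" where
  "inversion \<Xi> n \<eta> = (\<lambda>i. (\<Xi> / enorm n \<eta>)\<^sup>2 * \<eta> i)"

lemma kelvin_eq: "kelvin \<Xi> n f \<eta> = (\<Xi> / enorm n \<eta>) ^ (n - 2) * f (inversion \<Xi> n \<eta>)"
  by (simp add: kelvin_def inversion_def)

lemma enorm_inversion: "enorm n (inversion \<Xi> n \<eta>) = \<Xi>\<^sup>2 / enorm n \<eta>"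
proof (cases "enorm n \<eta> = 0")
  case False
  then show ?thesis
    unfolding inversion_def enorm_scale by (simp add: power2_eq_square)
qed (simp add: inversion_def enorm_def)

lemma inversion_in_cballn:
  assumes "\<eta> \<in> cballn n R" "\<Xi>\<^sup>2 / enorm n \<eta> \<le> R'"
  shows "inversion \<Xi> n \<eta> \<in> cballn n R'"
  using assms by (simp add: cballn_def enorm_inversion) (simp add: inversion_def)

lemma inversion_inversion:
  assumes "\<Xi> \<noteq> 0" "enorm n \<eta> \<noteq> 0"
  shows "inversion \<Xi> n (inversion \<Xi> n \<eta>) = \<eta>"
proof
  fix i
  have "\<Xi> / enorm n (inversion \<Xi> n \<eta>) * (\<Xi> / enorm n \<eta>) = 1"
    using assms by (simp add: enorm_inversion power2_eq_square)
  then have "(\<Xi> / enorm n (inversion \<Xi> n \<eta>))\<^sup>2 * (\<Xi> / enorm n \<eta>)\<^sup>2 = 1"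
    by (metis power_mult_distrib power_one)
  then show "inversion \<Xi> n (inversion \<Xi> n \<eta>) i = \<eta> i"
    unfolding inversion_def[of _ _ "inversion \<Xi> n \<eta>"] by (simp add: inversion_def mult.assoc[symmetric])
qed

lemma kelvin_inversion:
  assumes "\<Xi> \<noteq> 0" "enorm n \<xi> \<noteq> 0"
  shows "kelvin \<Xi> n f (inversion \<Xi> n \<xi>) = (enorm n \<xi> / \<Xi>) ^ (n - 2) * f \<xi>"
  using assms by (simp add: kelvin_eq inversion_inversion enorm_inversion power2_eq_square)

lemma edist_inversion:
  assumes x: "enorm n x \<noteq> 0" and y: "enorm n y \<noteq> 0"
  shows "edist n (inversion \<Xi> n y) (inversion \<Xi> n x) = \<Xi>\<^sup>2 * edist n y x / (enorm n x * enorm n y)"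
proof -
  define a where "a = (\<Xi> / enorm n y)\<^sup>2"
  define b where "b = (\<Xi> / enorm n x)\<^sup>2"
  define P where "P = (\<Sum>i<n. x i * y i)"
  have sq: "(\<Sum>i<n. (c * y i - d * x i)\<^sup>2) = c\<^sup>2 * (enorm n y)\<^sup>2 - 2 * c * d * P + d\<^sup>2 * (enorm n x)\<^sup>2"
    for c d
  proof -
    have "(\<Sum>i<n. (c * y i - d * x i)\<^sup>2)
        = (\<Sum>i<n. c\<^sup>2 * (y i)\<^sup>2 - 2 * c * d * (x i * y i) + d\<^sup>2 * (x i)\<^sup>2)"
      by (intro sum.cong) (auto simp: power2_eq_square algebra_simps)
    also have "\<dots> = c\<^sup>2 * (\<Sum>i<n. (y i)\<^sup>2) - 2 * c * d * P + d\<^sup>2 * (\<Sum>i<n. (x i)\<^sup>2)"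
      by (simp add: sum.distrib sum_subtractf sum_distrib_left P_def)
    finally show ?thesis
      by (simp add: enorm_power2)
  qed
  have e1: "(edist n (inversion \<Xi> n y) (inversion \<Xi> n x))\<^sup>2
      = a\<^sup>2 * (enorm n y)\<^sup>2 - 2 * a * b * P + b\<^sup>2 * (enorm n x)\<^sup>2"
    using sq[of a b] by (simp add: edist_power2 inversion_def a_def b_def)
  have e2: "(edist n y x)\<^sup>2 = (enorm n y)\<^sup>2 - 2 * P + (enorm n x)\<^sup>2"
    using sq[of 1 1] by (simp add: edist_power2)
  have "(edist n (inversion \<Xi> n y) (inversion \<Xi> n x))\<^sup>2 = (\<Xi>\<^sup>2 * edist n y x / (enorm n x * enorm n y))\<^sup>2"
    unfolding e1 power_divide power_mult_distrib e2 using x y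
    by (simp add: a_def b_def field_simps power2_eq_square)
  then show ?thesis
    by (rule power2_eq_imp_eq) (auto intro!: divide_nonneg_nonneg mult_nonneg_nonneg)
qed

lemma inversion_lipschitz:
  assumes x: "r \<le> enorm n x" and y: "r \<le> enorm n y" and r: "0 < r"
    and L: "\<Xi>\<^sup>2 \<le> L * r\<^sup>2" and L0: "0 \<le> L"
  shows "edist n (inversion \<Xi> n y) (inversion \<Xi> n x) \<le> L * edist n y x"
proof -
  have "r\<^sup>2 \<le> enorm n x * enorm n y"
    using x y r mult_mono[OF x y] by (simp add: power2_eq_square)
  then have "\<Xi>\<^sup>2 * edist n y x \<le> L * (enorm n x * enorm n y) * edist n y x"
    using L L0 by (intro mult_right_mono) (auto intro: order_trans mult_left_mono)
  moreover have "0 < enorm n x * enorm n y"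
    using x y r by simp
  ultimately show ?thesis
    using x y r by (simp add: edist_inversion divide_le_eq mult_ac)
qed

section \<open>Flattening and the axial embedding\<close>

lemma flat_eq: "flat a n Q \<xi> = Q (a * enorm (n - 1) \<xi>) (a * \<xi> (n - 1))"
  by (simp add: flat_def enorm_def)

lemma rr_flat_args:
  assumes n: "1 \<le> n" and a: "0 < a"
  shows "rr (a * enorm (n - 1) \<xi>) (a * \<xi> (n - 1)) = a * enorm n \<xi>"
proof -
  have "(a * enorm (n - 1) \<xi>)\<^sup>2 + (a * \<xi> (n - 1))\<^sup>2 = (a * enorm n \<xi>)\<^sup>2"
    using n by (simp add: enorm_power2_split_last[of n] power_mult_distrib algebra_simps)
  then show ?thesis
    using a by (simp add: rr_def)
qed

lemma flat_cut0:
  assumes "1 \<le> n" "0 < a" "0 < \<Xi>"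
  shows "flat a n (cut0 chi (a * \<Xi>) Q) \<xi> = chi (enorm n \<xi> / \<Xi>) * flat a n Q \<xi>"
  unfolding flat_eq cut0_def rr_flat_args[OF assms(1,2)] using assms(2,3) by simp

lemma flat_cutinf:
  assumes "1 \<le> n" "0 < a" "0 < \<Xi>"
  shows "flat a n (cutinf chi (a * \<Xi>) Q) \<xi> = (1 - chi (enorm n \<xi> / \<Xi>)) * flat a n Q \<xi>"
  unfolding flat_eq cutinf_def rr_flat_args[OF assms(1,2)] using assms(2,3) by simp

lemma flat_mult: "flat a n (\<lambda>w z. Q1 w z * Q2 w z) \<xi> = flat a n Q1 \<xi> * flat a n Q2 \<xi>"
  by (simp add: flat_def)

text \<open>Flattened
  functions factor through it, which transports them from dimension \<open>m\<close> to dimension \<open>n\<close>.\<close>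

definition axial_embed :: "nat \<Rightarrow> nat \<Rightarrow> (nat \<Rightarrow> real) \<Rightarrow> (nat \<Rightarrow> real)" where
  "axial_embed n m \<eta> = (\<lambda>i. if i = 0 then enorm (n - 1) \<eta> else if i = m - 1 then \<eta> (n - 1) else 0)"

lemma axial_embed_last: "2 \<le> m \<Longrightarrow> axial_embed n m \<eta> (m - 1) = \<eta> (n - 1)"
  by (simp add: axial_embed_def)

lemma sum_axial_embed_head:
  assumes m: "2 \<le> m" and g: "g 0 0 = 0"
  shows "(\<Sum>i<m - 1. g (axial_embed n m y i) (axial_embed n m x i)) = g (enorm (n - 1) y) (enorm (n - 1) x)"
proof -
  have "(\<Sum>i<m - 1. g (axial_embed n m y i) (axial_embed n m x i))
      = (\<Sum>i<m - 1. if i = 0 then g (enorm (n - 1) y) (enorm (n - 1) x) else 0)"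
    using g by (intro sum.cong) (auto simp: axial_embed_def)
  also have "\<dots> = g (enorm (n - 1) y) (enorm (n - 1) x)"
    using m by (simp add: sum.delta)
  finally show ?thesis .
qed

lemma enorm_axial_embed_head: "2 \<le> m \<Longrightarrow> enorm (m - 1) (axial_embed n m \<eta>) = enorm (n - 1) \<eta>"
  using sum_axial_embed_head[of m "\<lambda>a b. a\<^sup>2" n \<eta> \<eta>] by (simp add: enorm_def abs_of_nonneg sum_nonneg)

lemma edist_axial_embed_head:
  "2 \<le> m \<Longrightarrow> edist (m - 1) (axial_embed n m y) (axial_embed n m x) = \<bar>enorm (n - 1) y - enorm (n - 1) x\<bar>"
  using sum_axial_embed_head[of m "\<lambda>a b. (a - b)\<^sup>2" n y x] by (simp add: edist_def enorm_def)

lemma flat_axial_embed: "2 \<le> m \<Longrightarrow> flat a m Q (axial_embed n m \<eta>) = flat a n Q \<eta>"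
  using enorm_axial_embed_head[of m n \<eta>] axial_embed_last[of m n \<eta>] by (simp add: flat_eq)

lemma enorm_axial_embed:
  assumes "2 \<le> m" "1 \<le> n"
  shows "enorm m (axial_embed n m \<eta>) = enorm n \<eta>"
proof -
  have "(enorm m (axial_embed n m \<eta>))\<^sup>2 = (enorm n \<eta>)\<^sup>2"
    using assms enorm_axial_embed_head[of m n \<eta>] axial_embed_last[of m n \<eta>]
    by (simp add: enorm_power2_split_last)
  then show ?thesis
    by simp
qed

lemma axial_embed_in_cballn:
  assumes "2 \<le> m" "1 \<le> n" "\<eta> \<in> cballn n R"
  shows "axial_embed n m \<eta> \<in> cballn m R"
  using assms by (simp add: cballn_def enorm_axial_embed) (simp add: axial_embed_def)

lemma edist_axial_embed_le:
  assumes m: "2 \<le> m" and n: "1 \<le> n"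
  shows "edist m (axial_embed n m y) (axial_embed n m x) \<le> edist n y x"
proof -
  have "(edist m (axial_embed n m y) (axial_embed n m x))\<^sup>2
      = (enorm (n - 1) y - enorm (n - 1) x)\<^sup>2 + (y (n - 1) - x (n - 1))\<^sup>2"
    using m edist_axial_embed_head[of m n y x] axial_embed_last[of m n]
    by (simp add: edist_power2_split_last power2_abs)
  also have "\<dots> \<le> (edist (n - 1) y x)\<^sup>2 + (y (n - 1) - x (n - 1))\<^sup>2"
    using power_mono[OF abs_enorm_diff_le_edist[of "n - 1" y x] abs_ge_zero, of 2] by simp
  also have "\<dots> = (edist n y x)\<^sup>2"
    using n by (simp add: edist_power2_split_last)
  finally show ?thesis
    by (simp add: power2_le_iff_abs_le)
qed

lemma axial_embed_inversion:
  assumes "2 \<le> m" "1 \<le> n"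
  shows "axial_embed n m (inversion \<Xi> n \<eta>) = inversion \<Xi> m (axial_embed n m \<eta>)"
proof -
  have "enorm (n - 1) (inversion \<Xi> n \<eta>) = (\<Xi> / enorm n \<eta>)\<^sup>2 * enorm (n - 1) \<eta>"
    unfolding inversion_def enorm_scale by simp
  then show ?thesis
    unfolding inversion_def[of \<Xi> m] enorm_axial_embed[OF assms]
    by (auto simp: axial_embed_def inversion_def)
qed

definition plane_point :: "real \<Rightarrow> real \<Rightarrow> real \<Rightarrow> nat \<Rightarrow> real" where
  "plane_point a w z = (\<lambda>i. if i = 0 then w / a else if i = 1 then z / a else 0)"

lemma enorm_plane_point: "0 < a \<Longrightarrow> enorm 2 (plane_point a w z) = rr w z / a"
  by (simp add: enorm_def numeral_2_eq_2 plane_point_def rr_def power_divide real_sqrt_divide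
      add_divide_distrib[symmetric])

lemma edist_plane_point:
  "0 < a \<Longrightarrow> edist 2 (plane_point a w' z') (plane_point a w z) = dist (w', z') (w, z) / a"
  by (simp add: edist_def enorm_def numeral_2_eq_2 plane_point_def dist_Pair_Pair dist_real_def
      power_divide real_sqrt_divide add_divide_distrib[symmetric] diff_divide_distrib[symmetric])

lemma flat_axial_plane_point:
  assumes "0 < a" "2 \<le> n" "0 \<le> w"
  shows "flat a n Q (axial_embed 2 n (plane_point a w z)) = Q w z"
  using assms by (simp add: flat_axial_embed) (simp add: flat_def plane_point_def)

lemma axial_plane_point_in_cballn:
  assumes "0 < a" "2 \<le> n" "rr w z \<le> R"
  shows "axial_embed 2 n (plane_point a w z) \<in> cballn n (R / a)"
proof (rule axial_embed_in_cballn[OF assms(2)])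
  show "plane_point a w z \<in> cballn 2 (R / a)"
    using assms by (simp add: cballn_def enorm_plane_point divide_right_mono) (simp add: plane_point_def)
qed simp

lemma continuous_on_halfdisc_if_contn_on_flat:
  assumes a: "0 < a" and n: "2 \<le> n" and Q: "contn_on n (cballn n (R / a)) (flat a n Q)"
  shows "continuous_on {(w, z). w \<ge> 0 \<and> rr w z \<le> R} (\<lambda>(w, z). Q w z)"
  unfolding continuous_on_iff
proof (intro ballI allI impI)
  let ?p = "\<lambda>w z. axial_embed 2 n (plane_point a w z)"
  fix p e assume p: "p \<in> {(w, z). w \<ge> 0 \<and> rr w z \<le> R}" and e: "(0::real) < e"
  obtain w z where wz: "p = (w, z)" "0 \<le> w" "rr w z \<le> R"
    using p by auto
  obtain d where d: "d > 0"
    "\<forall>y\<in>cballn n (R / a). edist n y (?p w z) < d \<longrightarrow> \<bar>flat a n Q y - flat a n Q (?p w z)\<bar> < e"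
    using Q axial_plane_point_in_cballn[OF a n wz(3)] e unfolding contn_on_def by meson
  show "\<exists>d>0. \<forall>p'\<in>{(w, z). w \<ge> 0 \<and> rr w z \<le> R}. dist p' p < d \<longrightarrow>
      dist ((\<lambda>(w, z). Q w z) p') ((\<lambda>(w, z). Q w z) p) < e"
  proof (intro exI[of _ "a * d"] conjI ballI impI)
    fix p' assume p': "p' \<in> {(w, z). w \<ge> 0 \<and> rr w z \<le> R}" "dist p' p < a * d"
    obtain w' z' where wz': "p' = (w', z')" "0 \<le> w'" "rr w' z' \<le> R"
      using p' by auto
    have "edist n (?p w' z') (?p w z) \<le> edist 2 (plane_point a w' z') (plane_point a w z)"
      by (rule edist_axial_embed_le[OF n]) simp
    also have "\<dots> < d"
      using a p' by (simp add: edist_plane_point wz wz' divide_less_eq mult.commute)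
    finally have "\<bar>flat a n Q (?p w' z') - flat a n Q (?p w z)\<bar> < e"
      using d axial_plane_point_in_cballn[OF a n wz'(3)] by blast
    then show "dist ((\<lambda>(w, z). Q w z) p') ((\<lambda>(w, z). Q w z) p) < e"
      using flat_axial_plane_point[OF a n wz(2)] flat_axial_plane_point[OF a n wz'(2)]
      by (simp add: wz wz' dist_real_def)
  qed (use a d in simp)
qed

lemma normC_le_comp_axial_embed:
  assumes F: "normC_le k m (cballn m R) F T" and k: "admissible k" and "2 \<le> m" "1 \<le> n"
  shows "normC_le k n (cballn n R) (\<lambda>\<eta>. F (axial_embed n m \<eta>)) (3 * T)"
  using normC_le_comp_lipschitz[OF F k order_refl, of "cballn n R" "axial_embed n m" n]
    axial_embed_in_cballn[OF assms(3,4)] edist_axial_embed_le[OF assms(3,4)] by simp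

lemma normC_le_flat_of_int_space:
  assumes a: "0 < a" and R: "0 < R" and k: "admissible k" and m: "2 \<le> m" and n: "1 \<le> n"
    and Q: "int_space k a m R Q"
  shows "normC_le k n (cballn n (R / a)) (flat a n Q) (3 * int_norm k a m R Q)"
proof -
  have "normC_le k m (cballn m (R / a)) (flat a m Q) (int_norm k a m R Q)"
    using Q a R m by (simp add: normC_le_cballn_iff int_space_def int_norm_def)
  from normC_le_comp_axial_embed[OF this k m n] show ?thesis
    by (rule normC_le_cong) (simp add: flat_axial_embed[OF m])
qed

lemma ext_norm_extension:
  assumes n: "0 < n" and \<Xi>: "0 < \<Xi>" and Q: "ext_space k a \<Xi> n Q"
  shows "ext_extends k a \<Xi> n Q (SOME F. ext_extends k a \<Xi> n Q F)"
    and "normC_le k n (cballn n \<Xi>) (SOME F. ext_extends k a \<Xi> n Q F) (ext_norm k a \<Xi> n Q)"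
proof -
  show F: "ext_extends k a \<Xi> n Q (SOME F. ext_extends k a \<Xi> n Q F)"
    using Q unfolding ext_space_def by (metis someI_ex)
  then show "normC_le k n (cballn n \<Xi>) (SOME F. ext_extends k a \<Xi> n Q F) (ext_norm k a \<Xi> n Q)"
    using n \<Xi> by (simp add: normC_le_cballn_iff ext_extends_def ext_norm_def)
qed

lemma glob_norm_nonneg:
  assumes "0 < a" "0 < \<Xi>" "0 < n" "glob_space k a \<Xi> chi n Q"
  shows "0 \<le> glob_norm k a \<Xi> chi n Q"
proof -
  have "normC_le k n (cballn n (2 * \<Xi>)) (flat a n (cut0 chi (a * \<Xi>) Q))
      (int_norm k a n (2 * (a * \<Xi>)) (cut0 chi (a * \<Xi>) Q))"
    using assms by (simp add: normC_le_cballn_iff glob_space_def int_space_def int_norm_def)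
  then have "0 \<le> int_norm k a n (2 * (a * \<Xi>)) (cut0 chi (a * \<Xi>) Q)"
    by (rule normC_le_nonneg)
  then show ?thesis
    by (simp add: glob_norm_def)
qed

lemma normC_le_flat_cut0:
  assumes a: "0 < a" and \<Xi>: "0 < \<Xi>" and k: "admissible k" and d: "2 \<le> d" and n: "1 \<le> n"
    and Q: "glob_space k a \<Xi> chi d Q"
  shows "normC_le k n (cballn n (2 * \<Xi>)) (flat a n (cut0 chi (a * \<Xi>) Q)) (3 * glob_norm k a \<Xi> chi d Q)"
proof -
  have "int_space k a d (2 * (a * \<Xi>)) (cut0 chi (a * \<Xi>) Q)"
    using Q by (simp add: glob_space_def)
  from normC_le_flat_of_int_space[OF a _ k d n this] a \<Xi>
  have "normC_le k n (cballn n (2 * \<Xi>)) (flat a n (cut0 chi (a * \<Xi>) Q))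
      (3 * int_norm k a d (2 * (a * \<Xi>)) (cut0 chi (a * \<Xi>) Q))"
    by simp
  then show ?thesis
    by (rule normC_le_mono) (simp add: glob_norm_def)
qed

lemma glob_space_extension:
  assumes n: "0 < n" and \<Xi>: "0 < \<Xi>" and Q: "glob_space k a \<Xi> chi n Q"
  obtains F where "ext_extends k a \<Xi> n (cutinf chi (a * \<Xi>) Q) F"
    and "normC_le k n (cballn n \<Xi>) F (glob_norm k a \<Xi> chi n Q)"
proof
  have ext: "ext_space k a \<Xi> n (cutinf chi (a * \<Xi>) Q)"
    using Q by (simp add: glob_space_def)
  show "ext_extends k a \<Xi> n (cutinf chi (a * \<Xi>) Q) (SOME F. ext_extends k a \<Xi> n (cutinf chi (a * \<Xi>) Q) F)"
    by (rule ext_norm_extension(1)[OF n \<Xi> ext])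
  show "normC_le k n (cballn n \<Xi>) (SOME F. ext_extends k a \<Xi> n (cutinf chi (a * \<Xi>) Q) F)
      (glob_norm k a \<Xi> chi n Q)"
    by (rule normC_le_mono[OF ext_norm_extension(2)[OF n \<Xi> ext]]) (simp add: glob_norm_def)
qed

lemma normC_le_radial_power:
  assumes k: "admissible k" and \<Xi>: "0 < \<Xi>"
  shows "normC_le k n (cballn n \<Xi>) (\<lambda>\<eta>. (enorm n \<eta> / \<Xi>) ^ p) (1 + real p * (1 / \<Xi>))"
proof (rule normC_le_power[OF k])
  show "0 \<le> enorm n \<eta> / \<Xi> \<and> enorm n \<eta> / \<Xi> \<le> 1" if "\<eta> \<in> cballn n \<Xi>" for \<eta>
    using that \<Xi> by (simp add: cballn_def)
  show "\<bar>enorm n y / \<Xi> - enorm n x / \<Xi>\<bar> \<le> 1 / \<Xi> * edist n y x" for x y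
    using abs_enorm_diff_le_edist[of n y x] \<Xi>
    by (simp add: diff_divide_distrib[symmetric] abs_div divide_right_mono)
qed (use \<Xi> in simp)

lemma normC_le_kelvin_weight:
  assumes k: "admissible k" and \<Xi>: "0 < \<Xi>"
  shows "normC_le k n {\<xi> \<in> cballn n R. \<Xi> \<le> enorm n \<xi>} (\<lambda>\<xi>. (\<Xi> / enorm n \<xi>) ^ p)
    (1 + real p * (1 / \<Xi>))"
proof (rule normC_le_power[OF k])
  show "0 \<le> \<Xi> / enorm n \<xi> \<and> \<Xi> / enorm n \<xi> \<le> 1" if "\<xi> \<in> {\<xi> \<in> cballn n R. \<Xi> \<le> enorm n \<xi>}" for \<xi>
    using that \<Xi> by auto
  show "\<bar>\<Xi> / enorm n y - \<Xi> / enorm n x\<bar> \<le> 1 / \<Xi> * edist n y x"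
    if x: "x \<in> {\<xi> \<in> cballn n R. \<Xi> \<le> enorm n \<xi>}" and y: "y \<in> {\<xi> \<in> cballn n R. \<Xi> \<le> enorm n \<xi>}"
    for x y
  proof -
    have xy: "\<Xi> \<le> enorm n x" "\<Xi> \<le> enorm n y"
      using x y by auto
    have "\<Xi> / enorm n y - \<Xi> / enorm n x = \<Xi> * (enorm n x - enorm n y) / (enorm n x * enorm n y)"
      using xy \<Xi> by (simp add: field_simps)
    then have "\<bar>\<Xi> / enorm n y - \<Xi> / enorm n x\<bar> = \<Xi> * \<bar>enorm n x - enorm n y\<bar> / (enorm n x * enorm n y)"
      using xy \<Xi> by (simp add: abs_div abs_mult)
    also have "\<dots> \<le> \<Xi> * edist n y x / (\<Xi> * \<Xi>)"
    proof (rule frac_le)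
      show "\<Xi> * \<bar>enorm n x - enorm n y\<bar> \<le> \<Xi> * edist n y x"
        using abs_enorm_diff_le_edist[of n x y] edist_commute[of n x y] \<Xi> by simp
      show "\<Xi> * \<Xi> \<le> enorm n x * enorm n y"
        using xy \<Xi> by (intro mult_mono) auto
    qed (use \<Xi> in auto)
    also have "\<dots> = 1 / \<Xi> * edist n y x"
      using \<Xi> by simp
    finally show ?thesis .
  qed
qed (use \<Xi> in simp)

text \<open>On the shell \<open>\<Xi> \<le> |\<xi>| \<le> 2\<Xi>\<close> the flattened exterior piece is recovered from the extension
  \<open>F\<close> of its Kelvin transform by undoing the transform.\<close>

lemma normC_le_flat_cutinf:
  assumes a: "0 < a" and \<Xi>: "0 < \<Xi>" and k: "admissible k" and n: "1 \<le> n"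
    and chi: "\<And>t. t \<le> 1 \<Longrightarrow> chi t = 1"
    and F: "ext_extends k a \<Xi> n (cutinf chi (a * \<Xi>) Q) F" and FE: "normC_le k n (cballn n \<Xi>) F E"
  shows "normC_le k n (cballn n (2 * \<Xi>)) (flat a n (cutinf chi (a * \<Xi>) Q))
    ((1 + real (n - 2) * (1 / \<Xi>)) * (3 * E))"
proof -
  define A where "A = {\<xi> \<in> cballn n (2 * \<Xi>). \<Xi> \<le> enorm n \<xi>}"
  have inv: "inversion \<Xi> n \<xi> \<in> cballn n \<Xi>" if "\<xi> \<in> A" for \<xi>
    using that \<Xi> by (intro inversion_in_cballn) (auto simp: A_def divide_le_eq power2_eq_square)
  have lip: "edist n (inversion \<Xi> n y) (inversion \<Xi> n x) \<le> 1 * edist n y x"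
    if "x \<in> A" "y \<in> A" for x y
    by (rule inversion_lipschitz[of \<Xi>]) (use that \<Xi> in \<open>auto simp: A_def\<close>)
  have "normC_le k n A (\<lambda>\<xi>. F (inversion \<Xi> n \<xi>)) (3 * 1 * E)"
    by (rule normC_le_comp_lipschitz[OF FE k order_refl inv lip])
  then have "normC_le k n A (\<lambda>\<xi>. (\<Xi> / enorm n \<xi>) ^ (n - 2) * F (inversion \<Xi> n \<xi>))
      ((1 + real (n - 2) * (1 / \<Xi>)) * (3 * E))"
    using normC_le_mult[OF normC_le_kelvin_weight[OF k \<Xi>]] by (simp add: A_def)
  moreover have "(\<Xi> / enorm n \<xi>) ^ (n - 2) * F (inversion \<Xi> n \<xi>) = flat a n (cutinf chi (a * \<Xi>) Q) \<xi>"
    if "\<xi> \<in> A" for \<xi>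
  proof -
    have "enorm n \<xi> \<noteq> 0"
      using that \<Xi> by (auto simp: A_def)
    moreover have "F (inversion \<Xi> n \<xi>) = kelvin \<Xi> n (flat a n (cutinf chi (a * \<Xi>) Q)) (inversion \<Xi> n \<xi>)"
      using F inv[OF that] \<open>enorm n \<xi> \<noteq> 0\<close> \<Xi> by (simp add: ext_extends_def enorm_inversion)
    ultimately show ?thesis
      using \<Xi> by (simp add: kelvin_inversion power_mult_distrib[symmetric])
  qed
  ultimately have "normC_le k n A (flat a n (cutinf chi (a * \<Xi>) Q))
      ((1 + real (n - 2) * (1 / \<Xi>)) * (3 * E))"
    by (rule normC_le_cong)
  then show ?thesis
    unfolding A_def using \<Xi> chi
    by (intro normC_le_extend_zero[OF k \<Xi>]) (simp_all add: flat_cutinf[OF n a \<Xi>])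
qed

text \<open>The inversion sends \<open>0 < |\<eta>| \<le> \<Xi>/2\<close> outside the ball of radius \<open>2\<Xi>\<close>; at \<open>\<eta> = 0\<close> it
  takes the junk value \<open>0\<close>, so the continuous extension by zero is spelled out.\<close>

lemma normC_le_inversion_extend_zero:
  assumes \<Xi>: "0 < \<Xi>" and k: "admissible k"
    and vanish: "\<And>\<xi>. 2 * \<Xi> \<le> enorm n \<xi> \<Longrightarrow> f \<xi> = 0"
    and f: "normC_le k n (cballn n (2 * \<Xi>)) f T"
  shows "normC_le k n (cballn n \<Xi>) (\<lambda>\<eta>. if enorm n \<eta> = 0 then 0 else f (inversion \<Xi> n \<eta>)) (12 * T)"
proof -
  define B where "B = {\<eta> \<in> cballn n \<Xi>. \<Xi> / 2 \<le> enorm n \<eta>}"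
  have inv: "inversion \<Xi> n \<eta> \<in> cballn n (2 * \<Xi>)" if "\<eta> \<in> B" for \<eta>
    using that \<Xi> by (intro inversion_in_cballn) (auto simp: B_def divide_le_eq power2_eq_square)
  have lip: "edist n (inversion \<Xi> n y) (inversion \<Xi> n x) \<le> 4 * edist n y x"
    if "x \<in> B" "y \<in> B" for x y
    by (rule inversion_lipschitz[of "\<Xi> / 2"]) (use that \<Xi> in \<open>auto simp: B_def power2_eq_square\<close>)
  have "normC_le k n B (\<lambda>\<eta>. f (inversion \<Xi> n \<eta>)) (12 * T)"
    using normC_le_comp_lipschitz[OF f k _ inv lip] by simp
  then have shell: "normC_le k n B (\<lambda>\<eta>. if enorm n \<eta> = 0 then 0 else f (inversion \<Xi> n \<eta>)) (12 * T)"
    by (rule normC_le_cong) (use \<Xi> in \<open>auto simp: B_def\<close>)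
  have inner: "f (inversion \<Xi> n \<eta>) = 0" if "0 < enorm n \<eta>" "enorm n \<eta> \<le> \<Xi> / 2" for \<eta>
  proof (rule vanish)
    have "2 * \<Xi> * enorm n \<eta> \<le> \<Xi> * \<Xi>"
      using that \<Xi> by (simp add: mult.commute mult_left_mono le_divide_eq)
    then show "2 * \<Xi> \<le> enorm n (inversion \<Xi> n \<eta>)"
      using that by (simp add: enorm_inversion le_divide_eq power2_eq_square)
  qed
  show ?thesis
    by (rule normC_le_extend_zero[OF k _ _ shell[unfolded B_def]])
      (use \<Xi> inner in \<open>auto simp: less_le\<close>)
qed

lemma normC_le_lifted_kelvin:
  assumes \<Xi>: "0 < \<Xi>" and k: "admissible k" and n: "1 \<le> n" and m: "2 \<le> m"
    and F: "normC_le k m (cballn m \<Xi>) F E"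
  shows "normC_le k n (cballn n \<Xi>) (\<lambda>\<eta>. (enorm n \<eta> / \<Xi>) ^ (m - 2) * F (axial_embed n m \<eta>))
    ((1 + real (m - 2) * (1 / \<Xi>)) * (3 * E))"
  by (rule normC_le_mult[OF normC_le_radial_power[OF k \<Xi>] normC_le_comp_axial_embed[OF F k m n]])

lemma lifted_kelvin_eq:
  assumes a: "0 < a" and \<Xi>: "0 < \<Xi>" and n: "1 \<le> n" and m: "2 \<le> m"
    and F: "ext_extends k a \<Xi> m Q F" and \<eta>: "\<eta> \<in> cballn n \<Xi>" "enorm n \<eta> \<noteq> 0"
  shows "(enorm n \<eta> / \<Xi>) ^ (m - 2) * F (axial_embed n m \<eta>) = flat a n Q (inversion \<Xi> n \<eta>)"
proof -
  have "F (axial_embed n m \<eta>) = kelvin \<Xi> m (flat a m Q) (axial_embed n m \<eta>)"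
    using F axial_embed_in_cballn[OF m n \<eta>(1)] \<eta>(2) enorm_axial_embed[OF m n]
    by (simp add: ext_extends_def)
  also have "\<dots> = (\<Xi> / enorm n \<eta>) ^ (m - 2) * flat a n Q (inversion \<Xi> n \<eta>)"
    by (simp add: kelvin_eq enorm_axial_embed[OF m n] axial_embed_inversion[OF m n, symmetric]
        flat_axial_embed[OF m])
  finally show ?thesis
    using \<Xi> \<eta>(2) by (simp add: power_mult_distrib[symmetric])
qed

lemma kelvin_flat_cutinf_mult:
  assumes a: "0 < a" and \<Xi>: "0 < \<Xi>" and n: "1 \<le> n"
    and F2: "ext_extends k a \<Xi> n (cutinf chi (a * \<Xi>) Q2) F2" and \<eta>: "\<eta> \<in> cballn n \<Xi>" "enorm n \<eta> \<noteq> 0"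
  shows "kelvin \<Xi> n (flat a n (cutinf chi (a * \<Xi>) (\<lambda>w z. Q1 w z * Q2 w z))) \<eta>
    = flat a n Q1 (inversion \<Xi> n \<eta>) * F2 \<eta>"
proof -
  have "F2 \<eta> = kelvin \<Xi> n (flat a n (cutinf chi (a * \<Xi>) Q2)) \<eta>"
    using F2 \<eta> by (simp add: ext_extends_def)
  then show ?thesis
    unfolding kelvin_eq flat_cutinf[OF n a \<Xi>] flat_mult by simp
qed

section \<open>Products\<close>

context
  fixes a \<Xi> :: real and chi :: "real \<Rightarrow> real" and k :: "real option" and n m :: nat
  assumes a: "0 < a" and \<Xi>: "0 < \<Xi>" and k: "admissible k" and n: "2 \<le> n" and m: "2 \<le> m"
    and chi_inner: "\<And>t. t \<le> 1 \<Longrightarrow> chi t = 1" and chi_outer: "\<And>t. 2 \<le> t \<Longrightarrow> chi t = 0"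
begin

lemma normC_le_flat_cut0_mult:
  assumes Q1: "glob_space k a \<Xi> chi m Q1" and Q2: "glob_space k a \<Xi> chi n Q2"
  shows "normC_le k n (cballn n (2 * \<Xi>)) (flat a n (cut0 chi (a * \<Xi>) (\<lambda>w z. Q1 w z * Q2 w z)))
    (9 * (2 + real (n - 2) / \<Xi>) * glob_norm k a \<Xi> chi m Q1 * glob_norm k a \<Xi> chi n Q2)"
proof -
  define g1 g2 where "g1 = glob_norm k a \<Xi> chi m Q1" and "g2 = glob_norm k a \<Xi> chi n Q2"
  have n': "0 < n" "1 \<le> n" "2 \<le> n" and m': "2 \<le> m"
    using n m by auto
  obtain F2 where F2: "ext_extends k a \<Xi> n (cutinf chi (a * \<Xi>) Q2) F2"
    and E2: "normC_le k n (cballn n \<Xi>) F2 g2"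
    using glob_space_extension[OF n'(1) \<Xi> Q2] unfolding g2_def by blast
  have split: "flat a n (cut0 chi (a * \<Xi>) (\<lambda>w z. Q1 w z * Q2 w z)) \<xi> = flat a n (cut0 chi (a * \<Xi>) Q1) \<xi> *
      (flat a n (cut0 chi (a * \<Xi>) Q2) \<xi> + flat a n (cutinf chi (a * \<Xi>) Q2) \<xi>)" for \<xi>
    unfolding flat_cut0[OF n'(2) a \<Xi>] flat_cutinf[OF n'(2) a \<Xi>] flat_mult
    by (simp add: algebra_simps)
  have K2: "normC_le k n (cballn n (2 * \<Xi>)) (flat a n (cutinf chi (a * \<Xi>) Q2))
      ((1 + real (n - 2) * (1 / \<Xi>)) * (3 * g2))"
    by (rule normC_le_flat_cutinf[OF a \<Xi> k n'(2) _ F2 E2]) (use chi_inner in simp)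
  have "normC_le k n (cballn n (2 * \<Xi>)) (flat a n (cut0 chi (a * \<Xi>) (\<lambda>w z. Q1 w z * Q2 w z)))
      (3 * g1 * (3 * g2 + (1 + real (n - 2) * (1 / \<Xi>)) * (3 * g2)))"
    unfolding g1_def g2_def
    by (intro normC_le_cong[OF normC_le_mult[OF normC_le_flat_cut0[OF a \<Xi> k m' n'(2) Q1]
          normC_le_add[OF normC_le_flat_cut0[OF a \<Xi> k n'(3) n'(2) Q2] K2[unfolded g2_def]]]])
      (rule split[symmetric])
  then show ?thesis
    by (rule normC_le_mono) (simp add: g1_def g2_def algebra_simps)
qed

lemma interior_product:
  assumes Q1: "glob_space k a \<Xi> chi m Q1" and Q2: "glob_space k a \<Xi> chi n Q2"
  defines "P \<equiv> \<lambda>w z. Q1 w z * Q2 w z"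
  shows "int_space k a n (2 * (a * \<Xi>)) (cut0 chi (a * \<Xi>) P) \<and>
    int_norm k a n (2 * (a * \<Xi>)) (cut0 chi (a * \<Xi>) P)
      \<le> 9 * (2 + real (n - 2) / \<Xi>) * glob_norm k a \<Xi> chi m Q1 * glob_norm k a \<Xi> chi n Q2"
proof -
  have R: "2 * (a * \<Xi>) / a = 2 * \<Xi>"
    using a by simp
  have n': "0 < n" "2 \<le> n"
    using n by auto
  note flatP = normC_le_flat_cut0_mult[OF Q1 Q2, folded P_def]
  have "continuous_on {(w, z). 0 \<le> w \<and> rr w z \<le> 2 * (a * \<Xi>)} (\<lambda>(w, z). cut0 chi (a * \<Xi>) P w z)"
    using continuous_on_halfdisc_if_contn_on_flat[OF a n'(2)] normC_le_imp_contn_on[OF flatP] R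
    by simp
  moreover have "cut0 chi (a * \<Xi>) P w (- z) = cut0 chi (a * \<Xi>) P w z" if "0 \<le> w" for w z
    using Q1 Q2 that by (simp add: glob_space_def cut0_def rr_def P_def)
  ultimately show ?thesis
    using flatP normC_le_cballn_iff[OF n'(1)] \<Xi> R by (simp add: int_space_def int_norm_def)
qed

lemma ext_extends_mult:
  assumes Q1: "glob_space k a \<Xi> chi m Q1" and Q2: "glob_space k a \<Xi> chi n Q2"
  shows "\<exists>G. ext_extends k a \<Xi> n (cutinf chi (a * \<Xi>) (\<lambda>w z. Q1 w z * Q2 w z)) G \<and>
    normC_le k n (cballn n \<Xi>) G
      (3 * (13 + real (m - 2) / \<Xi>) * glob_norm k a \<Xi> chi m Q1 * glob_norm k a \<Xi> chi n Q2)"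
proof -
  define g1 g2 where "g1 = glob_norm k a \<Xi> chi m Q1" and "g2 = glob_norm k a \<Xi> chi n Q2"
  have n': "0 < n" "1 \<le> n" and m': "0 < m" "2 \<le> m"
    using n m by auto
  obtain F1 where F1: "ext_extends k a \<Xi> m (cutinf chi (a * \<Xi>) Q1) F1"
    and E1: "normC_le k m (cballn m \<Xi>) F1 g1"
    using glob_space_extension[OF m'(1) \<Xi> Q1] unfolding g1_def by blast
  obtain F2 where F2: "ext_extends k a \<Xi> n (cutinf chi (a * \<Xi>) Q2) F2"
    and E2: "normC_le k n (cballn n \<Xi>) F2 g2"
    using glob_space_extension[OF n'(1) \<Xi> Q2] unfolding g2_def by blast
  define J where "J = (\<lambda>\<eta>. if enorm n \<eta> = 0 then 0 else flat a n (cut0 chi (a * \<Xi>) Q1) (inversion \<Xi> n \<eta>))"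
  define G where "G = (\<lambda>\<eta>. (J \<eta> + (enorm n \<eta> / \<Xi>) ^ (m - 2) * F1 (axial_embed n m \<eta>)) * F2 \<eta>)"
  have vanish: "flat a n (cut0 chi (a * \<Xi>) Q1) \<xi> = 0" if "2 * \<Xi> \<le> enorm n \<xi>" for \<xi>
    using that \<Xi> chi_outer[of "enorm n \<xi> / \<Xi>"] by (simp add: flat_cut0[OF n'(2) a \<Xi>] le_divide_eq)
  have J: "normC_le k n (cballn n \<Xi>) J (12 * (3 * g1))"
    unfolding J_def g1_def
    by (rule normC_le_inversion_extend_zero[OF \<Xi> k _ normC_le_flat_cut0[OF a \<Xi> k m'(2) n'(2) Q1]])
      (use vanish in blast)
  have "normC_le k n (cballn n \<Xi>) G ((12 * (3 * g1) + (1 + real (m - 2) * (1 / \<Xi>)) * (3 * g1)) * g2)"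
    unfolding G_def
    by (rule normC_le_mult[OF normC_le_add[OF J normC_le_lifted_kelvin[OF \<Xi> k n'(2) m'(2) E1]] E2])
  then have GT: "normC_le k n (cballn n \<Xi>) G (3 * (13 + real (m - 2) / \<Xi>) * g1 * g2)"
    by (rule normC_le_mono) (simp add: algebra_simps)
  have "G \<eta> = kelvin \<Xi> n (flat a n (cutinf chi (a * \<Xi>) (\<lambda>w z. Q1 w z * Q2 w z))) \<eta>"
    if \<eta>: "\<eta> \<in> cballn n \<Xi>" "enorm n \<eta> \<noteq> 0" for \<eta>
  proof -
    have "J \<eta> + (enorm n \<eta> / \<Xi>) ^ (m - 2) * F1 (axial_embed n m \<eta>)
        = flat a n (cut0 chi (a * \<Xi>) Q1) (inversion \<Xi> n \<eta>)
          + flat a n (cutinf chi (a * \<Xi>) Q1) (inversion \<Xi> n \<eta>)"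
      using lifted_kelvin_eq[OF a \<Xi> n'(2) m'(2) F1 \<eta>] \<eta>(2) by (simp add: J_def)
    also have "\<dots> = flat a n Q1 (inversion \<Xi> n \<eta>)"
      unfolding flat_cut0[OF n'(2) a \<Xi>] flat_cutinf[OF n'(2) a \<Xi>] by (simp add: algebra_simps)
    finally show ?thesis
      using kelvin_flat_cutinf_mult[OF a \<Xi> n'(2) F2 \<eta>] by (simp add: G_def)
  qed
  moreover have "inC k n \<Xi> G"
    using GT normC_le_cballn_iff[OF n'(1) \<Xi>] by blast
  ultimately show ?thesis
    using GT unfolding ext_extends_def g1_def g2_def by auto
qed

lemma exterior_product:
  assumes Q1: "glob_space k a \<Xi> chi m Q1" and Q2: "glob_space k a \<Xi> chi n Q2"
  defines "P \<equiv> \<lambda>w z. Q1 w z * Q2 w z"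
  shows "ext_space k a \<Xi> n (cutinf chi (a * \<Xi>) P) \<and>
    ext_norm k a \<Xi> n (cutinf chi (a * \<Xi>) P)
      \<le> 3 * (13 + real (m - 2) / \<Xi>) * glob_norm k a \<Xi> chi m Q1 * glob_norm k a \<Xi> chi n Q2"
proof -
  have n': "0 < n"
    using n by simp
  obtain G where G: "ext_extends k a \<Xi> n (cutinf chi (a * \<Xi>) P) G"
    and GT: "normC_le k n (cballn n \<Xi>) G
      (3 * (13 + real (m - 2) / \<Xi>) * glob_norm k a \<Xi> chi m Q1 * glob_norm k a \<Xi> chi n Q2)"
    using ext_extends_mult[OF Q1 Q2, folded P_def] by blast
  have "cutinf chi (a * \<Xi>) P w (- z) = cutinf chi (a * \<Xi>) P w z" if "0 \<le> w" for w z
    using Q1 Q2 that by (simp add: glob_space_def cutinf_def rr_def P_def)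
  then have ext: "ext_space k a \<Xi> n (cutinf chi (a * \<Xi>) P)"
    using G unfolding ext_space_def by blast
  define F where "F = (SOME F. ext_extends k a \<Xi> n (cutinf chi (a * \<Xi>) P) F)"
  have F: "ext_extends k a \<Xi> n (cutinf chi (a * \<Xi>) P) F"
    unfolding F_def by (rule ext_norm_extension(1)[OF n' \<Xi> ext])
  have "F \<eta> = G \<eta>" if "\<eta> \<in> cballn n \<Xi>" for \<eta>
  proof (rule contn_on_eq_if_eq_off_origin[OF n' \<Xi> _ normC_le_imp_contn_on[OF GT] _ that])
    show "contn_on n (cballn n \<Xi>) F"
      using F by (simp add: ext_extends_def inC_def)
    show "F \<eta>' = G \<eta>'" if "\<eta>' \<in> cballn n \<Xi>" "enorm n \<eta>' \<noteq> 0" for \<eta>'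
      using F G that by (simp add: ext_extends_def)
  qed
  then have "normC_le k n (cballn n \<Xi>) F
      (3 * (13 + real (m - 2) / \<Xi>) * glob_norm k a \<Xi> chi m Q1 * glob_norm k a \<Xi> chi n Q2)"
    by (intro normC_le_cong[OF GT]) simp
  then show ?thesis
    using ext normC_le_cballn_iff[OF n' \<Xi>] by (simp add: ext_norm_def F_def)
qed

lemma glob_space_mult:
  assumes Q1: "glob_space k a \<Xi> chi m Q1" and Q2: "glob_space k a \<Xi> chi n Q2"
  shows "glob_space k a \<Xi> chi n (\<lambda>w z. Q1 w z * Q2 w z) \<and>
    glob_norm k a \<Xi> chi n (\<lambda>w z. Q1 w z * Q2 w z)
      \<le> (9 * (2 + real (n - 2) / \<Xi>) + 3 * (13 + real (m - 2) / \<Xi>))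
        * glob_norm k a \<Xi> chi m Q1 * glob_norm k a \<Xi> chi n Q2"
proof -
  define g where "g = glob_norm k a \<Xi> chi m Q1 * glob_norm k a \<Xi> chi n Q2"
  define c\<^sub>i c\<^sub>e where "c\<^sub>i = 9 * (2 + real (n - 2) / \<Xi>)" and "c\<^sub>e = 3 * (13 + real (m - 2) / \<Xi>)"
  have "0 \<le> g"
    unfolding g_def using glob_norm_nonneg[OF a \<Xi>] Q1 Q2 n m by simp
  moreover have "0 \<le> c\<^sub>i" "0 \<le> c\<^sub>e"
    using \<Xi> by (simp_all add: c\<^sub>i_def c\<^sub>e_def)
  ultimately have "c\<^sub>i * g \<le> (c\<^sub>i + c\<^sub>e) * g" "c\<^sub>e * g \<le> (c\<^sub>i + c\<^sub>e) * g"
    by (simp_all add: mult_right_mono)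
  then show ?thesis
    using interior_product[OF Q1 Q2] exterior_product[OF Q1 Q2] Q1 Q2
    by (auto simp: glob_space_def glob_norm_def g_def c\<^sub>i_def c\<^sub>e_def mult.assoc)
qed

end

theorem proposition8:
  fixes a \<Xi>0 \<alpha> :: real and chi :: "real \<Rightarrow> real" and n m :: nat
  assumes "a > 0" and "\<Xi>0 > 0" and "0 < \<alpha>" and "\<alpha> < 1"
    and "cutoff chi" and "n \<ge> 3" and "m \<ge> 3"
  shows "\<exists>C. \<forall>Q1 Q2 :: real \<Rightarrow> real \<Rightarrow> real.
     (glob_space None a \<Xi>0 chi m Q1 \<and> glob_space None a \<Xi>0 chi n Q2 \<longrightarrow>
        glob_space None a \<Xi>0 chi n (\<lambda>w z. Q1 w z * Q2 w z) \<and>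
        glob_norm None a \<Xi>0 chi n (\<lambda>w z. Q1 w z * Q2 w z)
          \<le> C * glob_norm None a \<Xi>0 chi m Q1 * glob_norm None a \<Xi>0 chi n Q2) \<and>
     (glob_space (Some \<alpha>) a \<Xi>0 chi m Q1 \<and> glob_space (Some \<alpha>) a \<Xi>0 chi n Q2 \<longrightarrow>
        glob_space (Some \<alpha>) a \<Xi>0 chi n (\<lambda>w z. Q1 w z * Q2 w z) \<and>
        glob_norm (Some \<alpha>) a \<Xi>0 chi n (\<lambda>w z. Q1 w z * Q2 w z)
          \<le> C * glob_norm (Some \<alpha>) a \<Xi>0 chi m Q1 * glob_norm (Some \<alpha>) a \<Xi>0 chi n Q2)"
proof -
  have chi: "\<And>t. t \<le> 1 \<Longrightarrow> chi t = 1" "\<And>t. 2 \<le> t \<Longrightarrow> chi t = 0"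
    using assms(5) by (auto simp: cutoff_def)
  have "admissible None" "admissible (Some \<alpha>)"
    using assms(3,4) by (simp_all add: admissible_def)
  moreover have "2 \<le> n" "2 \<le> m"
    using assms(6,7) by simp_all
  ultimately show ?thesis
    using glob_space_mult[OF assms(1,2)] chi by blast
qed

end
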